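(* Let $\delta>0$. Algorithm 2 described in the context, run with tolerance $\delta$, converges to a $\delta$-optimal solution in a finite number of iterations; that is, after finitely many iterations its stopping criterion $\overline{\theta}^k-\underline{\theta}^k\le\delta$ is satisfied.
   Context: Setting. Let $\mathbf d\ge 2$ be an integer, $\mathcal M$ a finite set of states, $\Omega$ a finite set of scenarios with $\pi^\omega=1/|\Omega|$. Let $\pi^m_1\ge0$ with $\sum_m\pi^m_1=1$ and, for $d\ge2$, $\pi^{lm}_d\ge0$ with $\sum_m\pi^{lm}_d=1$ for each $l$. For $d=1,\dots,\mathbf d$: cost vector $c_d$, matrices $A_d,C_d$, a bilinear map $(x,b)\mapsto x^\top B_db$ into the right-hand-side space, and a set $\mathcal Y_d$, given by linear constraints (possibly linking scenarios), of decisions $y_d=(y^\omega_d)_{\omega\in\Omega}$; $\mathcal Y^\omega_d$ is the convex compact set of admissible components $y^\omega_d$. Data vectors $b^{m\omega}_1$, $b^{lm\omega}_d$ ($d\ge2$); write $b^{lm}_d=(b^{lm\omega}_d)_{\omega\in\Omega}$. Define $\mathcal V^m_{\mathbf d}(x,y_{\mathbf d-1},b^{lm}_{\mathbf d})=\min_{y_{\mathbf d}\in\mathcal Y_{\mathbf d}}\sum_\omega\pi^\omega c_{\mathbf d}^\top y^\omega_{\mathbf d}$ s.t. $A_{\mathbf d}y^\omega_{\mathbf d}\le x^\top B_{\mathbf d}b^{lm\omega}_{\mathbf d}+C_{\mathbf d}y_{\mathbf d-1}$ for all $\omega$; for $2\le d\le\mathbf d-1$: $\mathcal V^m_d(x,y_{d-1},b^{lm}_d)=\min_{y_d\in\mathcal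 Y_d}\sum_\omega\pi^\omega\big(c_d^\top y^\omega_d+\sum_n\pi^{mn}_{d+1}\mathcal V^n_{d+1}(x,y^\omega_d,b^{mn}_{d+1})\big)$ s.t. $A_dy^\omega_d\le x^\top B_db^{lm\omega}_d+C_dy_{d-1}$ for all $\omega$; $\mathcal V^m_1(x)=\min_{y_1\in\mathcal Y_1}\sum_\omega\pi^\omega\big(c_1^\top y^\omega_1+\sum_n\pi^{mn}_2\mathcal V^n_2(x,y^\omega_1,b^{mn}_2)\big)$ s.t. $A_1y^\omega_1\le x^\top B_1b^{m\omega}_1$; $g(x)=\sum_m\pi^m_1\mathcal V^m_1(x)$. Standing assumptions: relatively complete recourse (all problems feasible with finite value); constants $\mathrm M_y,\mathrm M_b>0$ bounding the 1-norm $\|\cdot\|$ of every subgradient of every $\mathcal V^m_d$ with respect to its $y$-argument, respectively its $b$-argument. Approximating problems (for fixed $x$). For $1\le d\le\mathbf d-1$ and $m\in\mathcal M$ (for $d=1$ the arguments $y_0,b$ are absent and the constraint is $A_1y^\omega_1\le x^\top B_1b^{m\omega}_1$), $\mathbf{LP}^m_d(x,y_{d-1},b^{lm}_d)$ carries, for each $n$, a finite collection of tuples $(\underline\theta_s,\underline\lambda_s,\underline\sigma_s,\underline\nu_s,x_s,y_s,b_s)$ and is: minimise $\sum_\omega\pi^\omega(c_d^\top y^\omega_d+\sum_n\pi^{mn}_{d+1}\underline\vartheta^{\omega n})$ over $y_d\in\mathcal Y_d$, $\underline\vartheta^{\omega n}$, s.t. $A_dy^\omega_d\le x^\top B_db^{lm\omega}_d+C_dy_{d-1}$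 and $\underline\vartheta^{\omega n}\ge\underline\theta_s+\underline\lambda_s^\top(x-x_s)+\underline\sigma_s^\top(y^\omega_d-y_s)+\underline\nu_s^\top(b^{mn}_{d+1}-b_s)$ for all $\omega,n,s$. $\mathbf{UP}^m_d(y_{d-1},b^{lm}_d)$ carries, for each $n$, a finite collection of $(\overline\theta_s,y_s,b_s)$ and is: minimise $\sum_\omega\pi^\omega(c_d^\top y^\omega_d+\sum_n\pi^{mn}_{d+1}\overline\vartheta^{\omega n})$ over $y_d\in\mathcal Y_d$, $\overline\vartheta^{\omega n},\gamma^{\omega n},\zeta^{\omega n}$, $\mu^{\omega n}_s\ge0$, s.t. the same constraints $A_dy^\omega_d\le\dots$, $\overline\vartheta^{\omega n}\ge\sum_s\mu^{\omega n}_s\overline\theta_s+\mathrm M_y\|\gamma^{\omega n}\|+\mathrm M_b\|\zeta^{\omega n}\|$, $\sum_s\mu^{\omega n}_sy_s=y^\omega_d+\gamma^{\omega n}$, $\sum_s\mu^{\omega n}_sb_s=b^{mn}_{d+1}+\zeta^{\omega n}$, $\sum_s\mu^{\omega n}_s=1$. Adding a third argument $\tilde y$ to $\mathbf{UP}$ means imposing $y_d=\tilde y$. For $d=\mathbf d$ both are the problem defining $\mathcal V^m_{\mathbf d}$. Algorithm 2 (tolerance $\delta$), from given finite cut collections: $k:=0$, $\underline\theta^m_1:=-\infty$, $\overline\theta^m_1:=+\infty$. Each iteration: $k:=k+1$. Forward pass: $m_1\in\arg\max\{\overline\theta^m_1-\underline\theta^m_1:\pi^m_1>0\}$; solve $\mathbf{LP}^{m_1}_1(x)$,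 obtaining optimal $\underline y_1$ and $\underline\vartheta^{\omega n}_2$; solve $\mathbf{UP}^{m_1}_1(\underline y_1)$ obtaining $\overline{\underline\vartheta}^{\omega n}_2$. Set $d:=1$, $\hat d:=\mathbf d$; repeat: $d:=d+1$; $(\omega_{d-1},m_d)\in\arg\max\{\overline{\underline\vartheta}^{\omega n}_d-\underline\vartheta^{\omega n}_d:\pi^{m_{d-1}n}_d>0\}$; if the maximum exceeds $\delta(\mathbf d-d+1)/(\mathbf d-1)$, solve $\mathbf{LP}^{m_d}_d(x,\underline y^{\omega_{d-1}}_{d-1},b^{m_{d-1}m_d}_d)$ getting optimal $\underline y_d$ and $\underline\vartheta^{\omega n}_{d+1}$, and $\mathbf{UP}^{m_d}_d(\underline y^{\omega_{d-1}}_{d-1},b^{m_{d-1}m_d}_d,\underline y_d)$ getting $\overline{\underline\vartheta}^{\omega n}_{d+1}$; else $\hat d:=d-1$; until $\hat d=d-1$ or $d=\mathbf d$. Backward pass: for $d=\hat d,\dots,2$ and each $m\in\mathcal M$: solve $\mathbf{LP}^m_d(x,\underline y^{\omega_{d-1}}_{d-1},b^{m_{d-1}m}_d)$, obtaining its optimal value $\underline\theta$ and subgradients $\underline\lambda,\underline\sigma,\underline\nu$ of its optimal value w.r.t. $x$, $y_{d-1}$, $b$; solve $\mathbf{UP}^m_d(\underline y^{\omega_{d-1}}_{d-1},b^{m_{d-1}m}_d)$, obtaining optimal value $\overline\theta$; for every $l\in\mathcal M$ add $(\underline\theta,\underline\lambda,\underline\sigma,\underline\nu,x,\underline y^{\omega_{d-1}}_{d-1},b^{m_{d-1}m}_d)$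 to the collection for next state $m$ of $\mathbf{LP}^l_{d-1}$ and $(\overline\theta,\underline y^{\omega_{d-1}}_{d-1},b^{m_{d-1}m}_d)$ to that of $\mathbf{UP}^l_{d-1}$. Then for each $m$ solve $\mathbf{LP}^m_1(x)$, $\mathbf{UP}^m_1$ to get $\underline\theta^m_1$, $\underline\lambda^m_1$ (subgradient w.r.t. $x$), $\overline\theta^m_1$; set $\underline\theta^k:=\sum_m\pi^m_1\underline\theta^m_1$, $\underline\lambda^k:=\sum_m\pi^m_1\underline\lambda^m_1$, $\overline\theta^k:=\sum_m\pi^m_1\overline\theta^m_1$; stop if $\overline\theta^k-\underline\theta^k\le\delta$. *)

theory Defs
  imports "HOL-Analysis.Analysis"
begin

text \<open>
Stages are 1..D (D = the paper's bold d). Scenarios form the finite type 'w, states the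
finite type 'm. Per-scenario decisions live in 'y, per-scenario data vectors in 'b, right-hand
sides in 'r (componentwise order w.r.t. Basis), the fixed parameter x in 'x.
A full stage decision y_d = (y_d^w)_w is an element of 'y^'w, a data vector
b_d^{lm} = (b_d^{lmw})_w an element of 'b^'w.
\<close>

record ('x, 'y, 'b, 'r, 'w, 'm) msp =
  Dn   :: nat
  cst  :: "nat \<Rightarrow> 'y"
  Am   :: "nat \<Rightarrow> 'y \<Rightarrow> 'r"
  Cm   :: "nat \<Rightarrow> 'y \<Rightarrow> 'r"
  Bm   :: "nat \<Rightarrow> 'x \<Rightarrow> 'b \<Rightarrow> 'r"
  Yset :: "nat \<Rightarrow> ('y, 'w) vec set"
  pi1  :: "'m \<Rightarrow> real"
  pid  :: "nat \<Rightarrow> 'm \<Rightarrow> 'm \<Rightarrow> real"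
  bst1 :: "'m \<Rightarrow> ('b, 'w) vec"
  bst  :: "nat \<Rightarrow> 'm \<Rightarrow> 'm \<Rightarrow> ('b, 'w) vec"
  My   :: real
  Mb   :: real

definition vle :: "'a::euclidean_space \<Rightarrow> 'a \<Rightarrow> bool" where
  "vle u v \<longleftrightarrow> (\<forall>i\<in>Basis. u \<bullet> i \<le> v \<bullet> i)"

definition l1norm :: "'a::euclidean_space \<Rightarrow> real" where
  "l1norm v = (\<Sum>i\<in>Basis. \<bar>v \<bullet> i\<bar>)"

definition pw :: "'w::finite itself \<Rightarrow> real" where
  "pw _ = 1 / real CARD('w)"

text \<open>Feasible set of the stage-d problem (for d = 1 use yp = 0, b = bst1 m).\<close>

definition feas ::
  "('x::euclidean_space, 'y::euclidean_space, 'b::euclidean_space, 'r::euclidean_space, 'w::finite, 'm) msp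
    \<Rightarrow> nat \<Rightarrow> 'x \<Rightarrow> 'y \<Rightarrow> ('b, 'w) vec \<Rightarrow> ('y, 'w) vec set" where
  "feas P d x yp b = {y \<in> Yset P d.
      \<forall>\<omega>. vle (Am P d (y $ \<omega>)) (Bm P d x (b $ \<omega>) + Cm P d yp)}"

text \<open>Vrec P k: value function of stage D - k.\<close>

primrec Vrec ::
  "('x::euclidean_space, 'y::euclidean_space, 'b::euclidean_space, 'r::euclidean_space, 'w::finite, 'm::finite) msp
    \<Rightarrow> nat \<Rightarrow> 'm \<Rightarrow> 'x \<Rightarrow> 'y \<Rightarrow> ('b, 'w) vec \<Rightarrow> ereal" where
  "Vrec P 0 m x yp b =
     Inf ((\<lambda>y. \<Sum>\<omega>\<in>UNIV. ereal (pw TYPE('w)) * ereal (cst P (Dn P) \<bullet> (y $ \<omega>)))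
          ` feas P (Dn P) x yp b)"
| "Vrec P (Suc k) m x yp b =
     (let d = Dn P - Suc k in
     Inf ((\<lambda>y. \<Sum>\<omega>\<in>UNIV. ereal (pw TYPE('w)) *
              (ereal (cst P d \<bullet> (y $ \<omega>)) +
               (\<Sum>n\<in>UNIV. ereal (pid P (d + 1) m n) *
                   Vrec P k n x (y $ \<omega>) (bst P (d + 1) m n))))
          ` feas P d x yp b))"

text \<open>V P d m x y b = the paper's V^m_d(x, y_{d-1}, b^{lm}_d), for 1 <= d <= D.
  V^m_1(x) is V P 1 m x 0 (bst1 P m).\<close>

definition V where
  "V P d m x yp b = Vrec P (Dn P - d) m x yp b"

definition V1 where
  "V1 P m x = V P 1 m x 0 (bst1 P m)"

type_synonym ('x, 'y, 'b, 'w) lcut = "real \<times> 'x \<times> 'y \<times> ('b, 'w) vec \<times> 'x \<times> 'y \<times> ('b, 'w) vec"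
type_synonym ('y, 'b, 'w) ucut = "ereal \<times> 'y \<times> ('b, 'w) vec"

text \<open>value of the cut-based lower model (maximum of the cuts; -infinity if there are none)\<close>

definition Lapprox :: "('x::euclidean_space, 'y::euclidean_space, 'b::euclidean_space, 'w::finite) lcut set
    \<Rightarrow> 'x \<Rightarrow> 'y \<Rightarrow> ('b, 'w) vec \<Rightarrow> ereal" where
  "Lapprox S x y b = Sup ((\<lambda>(th, la, si, nu, xs, ys, bs).
      ereal (th + la \<bullet> (x - xs) + si \<bullet> (y - ys) + nu \<bullet> (b - bs))) ` S)"

text \<open>value of the inner upper-bound problem of UP: min over convex weights mu,
  with gamma = sum mu_s y_s - y and zeta = sum mu_s b_s - b (+infinity if there are no points)\<close>

definition Uapprox :: "real \<Rightarrow> real \<Rightarrow> ('y::euclidean_space, 'b::euclidean_space, 'w::finite) ucut set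
    \<Rightarrow> 'y \<Rightarrow> ('b, 'w) vec \<Rightarrow> ereal" where
  "Uapprox my mb S y b = Inf {(\<Sum>s\<in>S. ereal (\<mu> s) * fst s)
        + ereal (my * l1norm ((\<Sum>s\<in>S. \<mu> s *\<^sub>R fst (snd s)) - y))
        + ereal (mb * l1norm ((\<Sum>s\<in>S. \<mu> s *\<^sub>R snd (snd s)) - b)) | \<mu>.
      (\<forall>s\<in>S. 0 \<le> \<mu> s) \<and> (\<Sum>s\<in>S. \<mu> s) = 1}"

text \<open>Objective (in y, with the epigraph variables at their optimal values) of LP^m_d,
  where Lc d m n is the collection of LP^m_d for next state n. For d = D this is the
  objective of the problem defining V^m_D.\<close>

definition LPobj where
  "LPobj P (Lc :: nat \<Rightarrow> 'm::finite \<Rightarrow> 'm \<Rightarrow> ('x::euclidean_space, 'y::euclidean_space, 'b::euclidean_space, 'w::finite) lcut set)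
      d m x (y :: ('y, 'w) vec) =
    (\<Sum>\<omega>\<in>UNIV. ereal (pw TYPE('w)) *
       (ereal (cst P d \<bullet> (y $ \<omega>)) +
        (if d = Dn P then 0 else
         \<Sum>n\<in>UNIV. ereal (pid P (d + 1) m n) *
            Lapprox (Lc d m n) x (y $ \<omega>) (bst P (d + 1) m n))))"

definition LPval where
  "LPval P Lc d m x yp b = Inf (LPobj P Lc d m x ` feas P d x yp b)"

definition LPopt where
  "LPopt P Lc d m x yp b y \<longleftrightarrow> y \<in> feas P d x yp b \<and> LPobj P Lc d m x y = LPval P Lc d m x yp b"

definition UPobj where
  "UPobj P (Uc :: nat \<Rightarrow> 'm::finite \<Rightarrow> 'm \<Rightarrow> ('y::euclidean_space, 'b::euclidean_space, 'w::finite) ucut set)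
      d m (y :: ('y, 'w) vec) =
    (\<Sum>\<omega>\<in>UNIV. ereal (pw TYPE('w)) *
       (ereal (cst P d \<bullet> (y $ \<omega>)) +
        (if d = Dn P then 0 else
         \<Sum>n\<in>UNIV. ereal (pid P (d + 1) m n) *
            Uapprox (My P) (Mb P) (Uc d m n) (y $ \<omega>) (bst P (d + 1) m n))))"

definition UPval where
  "UPval P Uc d m x yp b = Inf (UPobj P Uc d m ` feas P d x yp b)"

definition subgrad :: "('a::real_inner \<Rightarrow> ereal) \<Rightarrow> 'a \<Rightarrow> 'a \<Rightarrow> bool" where
  "subgrad f a g \<longleftrightarrow> (\<forall>z. f a + ereal (g \<bullet> (z - a)) \<le> f z)"

definition subgrad2 :: "('a::real_inner \<Rightarrow> 'c::real_inner \<Rightarrow> ereal) \<Rightarrow> 'a \<Rightarrow> 'c \<Rightarrow> 'a \<Rightarrow> 'c \<Rightarrow> bool" where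
  "subgrad2 f a c g h \<longleftrightarrow> (\<forall>z w. f a c + ereal (g \<bullet> (z - a) + h \<bullet> (w - c)) \<le> f z w)"

record ('x, 'y, 'b, 'w, 'm) astate =
  Lcol :: "nat \<Rightarrow> 'm \<Rightarrow> 'm \<Rightarrow> ('x, 'y, 'b, 'w) lcut set"
  Ucol :: "nat \<Rightarrow> 'm \<Rightarrow> 'm \<Rightarrow> ('y, 'b, 'w) ucut set"
  thlo :: "'m \<Rightarrow> ereal"
  thup :: "'m \<Rightarrow> ereal"

text \<open>gap at stage d (d >= 2) for scenario w and next state n, along the forward path
  (ms = chosen states, ys = chosen stage solutions)\<close>

definition fgap where
  "fgap P (s :: ('x::euclidean_space, 'y::euclidean_space, 'b::euclidean_space, 'w::finite, 'm::finite) astate)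
      x (ms :: nat \<Rightarrow> 'm) (ys :: nat \<Rightarrow> ('y, 'w) vec) d \<omega> n =
    Uapprox (My P) (Mb P) (Ucol s (d - 1) (ms (d - 1)) n) (ys (d - 1) $ \<omega>) (bst P d (ms (d - 1)) n)
    - Lapprox (Lcol s (d - 1) (ms (d - 1)) n) x (ys (d - 1) $ \<omega>) (bst P d (ms (d - 1)) n)"

definition thr :: "nat \<Rightarrow> real \<Rightarrow> nat \<Rightarrow> ereal" where
  "thr D \<delta> d = ereal (\<delta> * real (D - d + 1) / real (D - 1))"

text \<open>Forward pass: dh is the paper's hat d, ms d = m_d, ws d = omega_d, ys d = underline y_d.\<close>

definition forward where
  "forward P x \<delta> s dh ms ws ys \<longleftrightarrow>
     1 \<le> dh \<and> dh \<le> Dn P \<and>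
     0 < pi1 P (ms 1) \<and>
     (\<forall>m. 0 < pi1 P m \<longrightarrow> thup s m - thlo s m \<le> thup s (ms 1) - thlo s (ms 1)) \<and>
     LPopt P (Lcol s) 1 (ms 1) x 0 (bst1 P (ms 1)) (ys 1) \<and>
     (\<forall>d\<in>{2..dh}.
        0 < pid P d (ms (d - 1)) (ms d) \<and>
        (\<forall>\<omega> n. 0 < pid P d (ms (d - 1)) n \<longrightarrow>
            fgap P s x ms ys d \<omega> n \<le> fgap P s x ms ys d (ws (d - 1)) (ms d)) \<and>
        thr (Dn P) \<delta> d < fgap P s x ms ys d (ws (d - 1)) (ms d) \<and>
        LPopt P (Lcol s) d (ms d) x (ys (d - 1) $ ws (d - 1)) (bst P d (ms (d - 1)) (ms d)) (ys d)) \<and>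
     (dh < Dn P \<longrightarrow>
        (\<forall>\<omega> n. 0 < pid P (dh + 1) (ms dh) n \<longrightarrow>
            fgap P s x ms ys (dh + 1) \<omega> n \<le> thr (Dn P) \<delta> (dh + 1)))"

text \<open>One backward stage d: for each m the cuts obtained from LP^m_d / UP^m_d are added,
  for every l, to the collections of LP^l_{d-1} / UP^l_{d-1} for next state m.
  sg d m = (lambda, sigma, nu).\<close>

definition bstage where
  "bstage P x (ms :: nat \<Rightarrow> 'm::finite) (ws :: nat \<Rightarrow> 'w::finite) (ys :: nat \<Rightarrow> ('y::euclidean_space, 'w) vec)
      (sg :: nat \<Rightarrow> 'm \<Rightarrow> 'x::euclidean_space \<times> 'y \<times> ('b::euclidean_space, 'w) vec) d
      (LU :: (nat \<Rightarrow> 'm \<Rightarrow> 'm \<Rightarrow> ('x, 'y, 'b, 'w) lcut set) \<times> (nat \<Rightarrow> 'm \<Rightarrow> 'm \<Rightarrow> ('y, 'b, 'w) ucut set)) =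
    (let L = fst LU; U = snd LU; yp = ys (d - 1) $ ws (d - 1);
         bb = (\<lambda>m. bst P d (ms (d - 1)) m) in
     (L(d - 1 := (\<lambda>l m. L (d - 1) l m \<union>
          {(real_of_ereal (LPval P L d m x yp (bb m)), fst (sg d m), fst (snd (sg d m)),
            snd (snd (sg d m)), x, yp, bb m)})),
      U(d - 1 := (\<lambda>l m. U (d - 1) l m \<union> {(UPval P U d m x yp (bb m), yp, bb m)}))))"

text \<open>collections after processing j backward stages dh, dh-1, ..., dh-j+1\<close>

primrec bcols where
  "bcols P x dh ms ws ys sg LU0 0 = LU0"
| "bcols P x dh ms ws ys sg LU0 (Suc j) = bstage P x ms ws ys sg (dh - j) (bcols P x dh ms ws ys sg LU0 j)"

definition bvalid where
  "bvalid P x dh ms ws ys sg LU0 \<longleftrightarrow>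
    (\<forall>j. j + 2 \<le> dh \<longrightarrow>
       (let d = dh - j; L = fst (bcols P x dh ms ws ys sg LU0 j);
            yp = ys (d - 1) $ ws (d - 1) in
        \<forall>m. let bb = bst P d (ms (d - 1)) m in
          \<bar>LPval P L d m x yp bb\<bar> \<noteq> \<infinity> \<and>
          subgrad (\<lambda>x'. LPval P L d m x' yp bb) x (fst (sg d m)) \<and>
          subgrad2 (\<lambda>y' b'. LPval P L d m x y' b') yp bb (fst (snd (sg d m))) (snd (snd (sg d m)))))"

definition alg2_step where
  "alg2_step P x \<delta> s s' \<longleftrightarrow>
    (\<exists>dh ms ws ys sg.
       forward P x \<delta> s dh ms ws ys \<and>
       bvalid P x dh ms ws ys sg (Lcol s, Ucol s) \<and>
       (let LU = bcols P x dh ms ws ys sg (Lcol s, Ucol s) (dh - 1) in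
        Lcol s' = fst LU \<and> Ucol s' = snd LU \<and>
        (\<forall>m. thlo s' m = LPval P (fst LU) 1 m x 0 (bst1 P m)) \<and>
        (\<forall>m. thup s' m = UPval P (snd LU) 1 m x 0 (bst1 P m)) \<and>
        (\<forall>m. \<exists>la. subgrad (\<lambda>x'. LPval P (fst LU) 1 m x' 0 (bst1 P m)) x la)))"

definition theta_lo where
  "theta_lo P s = (\<Sum>m\<in>UNIV. ereal (pi1 P m) * thlo s m)"

definition theta_up where
  "theta_up P s = (\<Sum>m\<in>UNIV. ereal (pi1 P m) * thup s m)"

definition alg2_stops where
  "alg2_stops P \<delta> s \<longleftrightarrow> theta_up P s - theta_lo P s \<le> ereal \<delta>"

definition std_assms where
  "std_assms (P :: ('x::euclidean_space, 'y::euclidean_space, 'b::euclidean_space, 'r::euclidean_space, 'w::finite, 'm::finite) msp) x \<longleftrightarrow>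
     2 \<le> Dn P \<and>
     (\<forall>d\<in>{1..Dn P}. linear (Am P d) \<and> linear (Cm P d) \<and> bilinear (Bm P d) \<and>
         polyhedron (Yset P d) \<and> compact (Yset P d)) \<and>
     (\<forall>m. 0 \<le> pi1 P m) \<and> (\<Sum>m\<in>UNIV. pi1 P m) = 1 \<and>
     (\<forall>d\<in>{2..Dn P}. \<forall>l. (\<forall>m. 0 \<le> pid P d l m) \<and> (\<Sum>m\<in>UNIV. pid P d l m) = 1) \<and>
     \<comment> \<open>relatively complete recourse\<close>
     (\<forall>m. \<bar>V1 P m x\<bar> \<noteq> \<infinity>) \<and>
     (\<forall>d\<in>{2..Dn P}. \<forall>l m. \<forall>z\<in>Yset P (d - 1). \<forall>\<omega>.
         \<bar>V P d m x (z $ \<omega>) (bst P d l m)\<bar> \<noteq> \<infinity>) \<and>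
     \<comment> \<open>subgradient bounds\<close>
     0 < My P \<and> 0 < Mb P \<and>
     (\<forall>d\<in>{2..Dn P}. \<forall>m x' yp b g.
         subgrad (\<lambda>y'. V P d m x' y' b) yp g \<longrightarrow> l1norm g \<le> My P) \<and>
     (\<forall>d\<in>{2..Dn P}. \<forall>m x' yp b g.
         subgrad (\<lambda>b'. V P d m x' yp b') b g \<longrightarrow> l1norm g \<le> Mb P)"

end

(*
  If the run never stops, every iteration after the first goes beyond stage 1 (a forward pass
  ending at stage 1 certifies a gap of at most delta at the root), so by pigeonhole some stage d,
  pair of states (l, m) and scenario omega recur at the end of infinitely many forward passes.
  Write eta = delta / (D - 1). At such a visit k the gap at the point y_k exceeds (D - d + 1) eta,
  and the backward pass adds a lower cut with slope sigma_k and an upper point at y_k whose values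
  differ by at most (D - d) eta. Both persist, so at a later visit k' the gap at y_k' is at most
  (D - d) eta + M_y |y_k - y_k'|_1 - sigma_k (y_k' - y_k), whence
  sigma_k (y_k - y_k') > eta - M_y |y_k - y_k'|_1. The lower approximations stay bounded above
  (cuts of stage d stay below (D - d) M) and below (by the cuts present at the first visit), so
  sigma_k (z - y_k) is bounded over the feasible polyhedron. Along a convergent subsequence
  y_k -> p this yields sigma_k (y_k - p) >= eta / 2, and stretching y_k away from p inside the
  polyhedron makes sigma_k (z - y_k) unbounded.
*)

theory Submission
  imports Defs
begin

section \<open>Sequences in a polyhedron separated by bounded cuts\<close>

lemma l1norm_le_DIM_norm: "l1norm (v::'a::euclidean_space) \<le> real DIM('a) * norm v"
proof -
  have "l1norm v \<le> (\<Sum>i\<in>(Basis::'a set). norm v)"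
    unfolding l1norm_def by (intro sum_mono Basis_le_norm)
  then show ?thesis by simp
qed

lemma abs_inner_le_bound: "norm y \<le> C \<Longrightarrow> \<bar>a \<bullet> y\<bar> \<le> norm a * C"
  using Cauchy_Schwarz_ineq2[of a y] mult_left_mono[of "norm y" C "norm a"] by simp

lemma polyhedron_eventually_stretch:
  fixes S :: "'a::euclidean_space set"
  assumes "polyhedron S" "p \<in> S" "0 \<le> t"
  shows "\<forall>\<^sub>F q in nhds p. q \<in> S \<longrightarrow> p + t *\<^sub>R (q - p) \<in> S"
proof -
  obtain F where F: "finite F" "S = \<Inter>F" "\<forall>h\<in>F. \<exists>a b. a \<noteq> 0 \<and> h = {x. a \<bullet> x \<le> b}"
    using assms(1) unfolding polyhedron_def by blast
  have "\<forall>\<^sub>F q in nhds p. q \<in> h \<longrightarrow> p + t *\<^sub>R (q - p) \<in> h" if hF: "h \<in> F" for h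
  proof -
    obtain a b where h: "h = {x. a \<bullet> x \<le> b}" using F(3) hF by blast
    have "a \<bullet> p \<le> b" using assms(2) F(2) hF h by auto
    then consider "a \<bullet> p = b" | "a \<bullet> p < b" by linarith
    then show ?thesis
    proof cases
      case 1
      have "a \<bullet> (p + t *\<^sub>R (q - p)) = b + t * (a \<bullet> q - b)" for q
        using 1 by (simp add: inner_add_right inner_diff_right algebra_simps)
      then show ?thesis
        using h assms(3) by (intro always_eventually) (auto simp: mult_nonneg_nonpos)
    next
      case 2
      have op: "open {q. a \<bullet> (p + t *\<^sub>R (q - p)) < b}"
        by (intro open_Collect_less continuous_intros)
      have "\<forall>\<^sub>F q in nhds p. a \<bullet> (p + t *\<^sub>R (q - p)) < b"
        using eventually_nhds_in_open[OF op] 2 by simp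
      then show ?thesis by (rule eventually_mono) (simp add: h)
    qed
  qed
  then have "\<forall>\<^sub>F q in nhds p. \<forall>h\<in>F. q \<in> h \<longrightarrow> p + t *\<^sub>R (q - p) \<in> h"
    using F(1) by (intro eventually_ball_finite) auto
  then show ?thesis by (rule eventually_mono) (simp add: F(2))
qed

lemma polyhedron_no_separating_cuts_at_limit:
  fixes Y \<sigma> :: "nat \<Rightarrow> 'a::euclidean_space"
  assumes S: "polyhedron S" "\<And>i. Y i \<in> S" and lim: "Y \<longlonglongrightarrow> p" "p \<in> S" and "0 < \<eta>"
    and sep: "\<And>i j. i < j \<Longrightarrow> \<eta> - c * norm (Y i - Y j) < \<sigma> i \<bullet> (Y i - Y j)"
    and bnd: "\<And>i z. z \<in> S \<Longrightarrow> \<sigma> i \<bullet> (z - Y i) \<le> R"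
  shows False
proof -
  have limit_sep: "\<eta> - c * norm (Y i - p) \<le> \<sigma> i \<bullet> (Y i - p)" for i
  proof (rule LIMSEQ_le)
    show "(\<lambda>j. \<eta> - c * norm (Y i - Y j)) \<longlonglongrightarrow> \<eta> - c * norm (Y i - p)"
      using lim by (intro tendsto_intros)
    show "(\<lambda>j. \<sigma> i \<bullet> (Y i - Y j)) \<longlonglongrightarrow> \<sigma> i \<bullet> (Y i - p)"
      using lim by (intro tendsto_intros)
    show "\<exists>N. \<forall>j\<ge>N. \<eta> - c * norm (Y i - Y j) \<le> \<sigma> i \<bullet> (Y i - Y j)"
      using sep by (auto intro!: exI[of _ "Suc i"] less_imp_le)
  qed
  \<comment> \<open>Stretching a point near \<open>p\<close> away from \<open>p\<close> by the factor \<open>T\<close> stays in \<open>S\<close> and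
    multiplies \<open>\<sigma> i \<bullet> (Y i - p) \<ge> \<eta> / 2\<close> by \<open>T - 1\<close>, which overshoots \<open>R\<close>.\<close>
  define T where "T = 2 + 2 * \<bar>R\<bar> / \<eta>"
  have T: "1 < T" "(T - 1) * (\<eta> / 2) = \<eta> / 2 + \<bar>R\<bar>"
    using \<open>0 < \<eta>\<close> unfolding T_def by (simp_all add: field_simps)
  have "(\<lambda>i. c * norm (Y i - p)) \<longlonglongrightarrow> 0"
    using lim by (auto intro!: tendsto_eq_intros)
  from order_tendstoD(2)[OF this, of "\<eta> / 2"] \<open>0 < \<eta>\<close>
  have "\<forall>\<^sub>F i in sequentially. c * norm (Y i - p) < \<eta> / 2" by simp
  moreover have "\<forall>\<^sub>F i in sequentially. Y i \<in> S \<longrightarrow> p + T *\<^sub>R (Y i - p) \<in> S"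
    using eventually_compose_filterlim[OF polyhedron_eventually_stretch[OF S(1) lim(2)] lim(1)] T
    by simp
  ultimately have "\<forall>\<^sub>F i in sequentially. c * norm (Y i - p) < \<eta> / 2 \<and> p + T *\<^sub>R (Y i - p) \<in> S"
    by eventually_elim (use S(2) in simp)
  then obtain i where i: "c * norm (Y i - p) < \<eta> / 2" "p + T *\<^sub>R (Y i - p) \<in> S"
    using eventually_happens'[OF sequentially_bot] by blast
  have "\<eta> / 2 < \<sigma> i \<bullet> (Y i - p)"
    using limit_sep[of i] i(1) by linarith
  then have "\<eta> / 2 + \<bar>R\<bar> < (T - 1) * (\<sigma> i \<bullet> (Y i - p))"
    using T by (metis diff_gt_0_iff_gt mult_strict_left_mono)
  also have "\<dots> = \<sigma> i \<bullet> (p + T *\<^sub>R (Y i - p) - Y i)"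
    by (simp add: inner_diff_right inner_add_right algebra_simps)
  also have "\<dots> \<le> R" using bnd[OF i(2)] .
  finally show False using \<open>0 < \<eta>\<close> by linarith
qed

lemma compact_polyhedron_no_separating_cuts:
  fixes Y \<sigma> :: "nat \<Rightarrow> 'a::euclidean_space"
  assumes "polyhedron S" "compact S" "\<And>i. Y i \<in> S" "0 < \<eta>"
    and "\<And>i j. i < j \<Longrightarrow> \<eta> - c * norm (Y i - Y j) < \<sigma> i \<bullet> (Y i - Y j)"
    and "\<And>i z. z \<in> S \<Longrightarrow> \<sigma> i \<bullet> (z - Y i) \<le> R"
  shows False
proof -
  obtain p r where "p \<in> S" "strict_mono r" "(Y \<circ> r) \<longlonglongrightarrow> p"
    using seq_compactE[OF compact_imp_seq_compact] assms(2,3) by metis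
  then show False
    using polyhedron_no_separating_cuts_at_limit[of S "Y \<circ> r" p \<eta> c "\<sigma> \<circ> r" R] assms
    by (auto simp: strict_mono_less)
qed

section \<open>Convex combinations in the extended reals\<close>

lemma convex_comb_ereal_le:
  assumes "finite A" "\<And>n. n \<in> A \<Longrightarrow> 0 \<le> p n" "(\<Sum>n\<in>A. p n) = 1"
    and "\<And>n. n \<in> A \<Longrightarrow> 0 < p n \<Longrightarrow> X n \<le> ereal r"
  shows "(\<Sum>n\<in>A. ereal (p n) * X n) \<le> ereal r"
proof -
  have "ereal (p n) * X n \<le> ereal (p n * r)" if "n \<in> A" for n
    using assms(2,4)[OF that] ereal_mult_left_mono[of "X n" "ereal r" "ereal (p n)"]
    by (cases "p n = 0") (auto simp: zero_ereal_def[symmetric])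
  then have "(\<Sum>n\<in>A. ereal (p n) * X n) \<le> (\<Sum>n\<in>A. ereal (p n * r))"
    by (rule sum_mono)
  then show ?thesis using assms(3) by (simp add: sum_distrib_right[symmetric])
qed

lemma convex_comb_ereal_ge:
  assumes "finite A" "\<And>n. n \<in> A \<Longrightarrow> 0 \<le> p n" "(\<Sum>n\<in>A. p n) = 1"
    and "\<And>n. n \<in> A \<Longrightarrow> 0 < p n \<Longrightarrow> ereal r \<le> X n"
  shows "ereal r \<le> (\<Sum>n\<in>A. ereal (p n) * X n)"
proof -
  have "ereal (p n * r) \<le> ereal (p n) * X n" if "n \<in> A" for n
    using assms(2,4)[OF that] ereal_mult_left_mono[of "ereal r" "X n" "ereal (p n)"]
    by (cases "p n = 0") (auto simp: zero_ereal_def[symmetric])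
  then have "(\<Sum>n\<in>A. ereal (p n * r)) \<le> (\<Sum>n\<in>A. ereal (p n) * X n)"
    by (rule sum_mono)
  then show ?thesis using assms(3) by (simp add: sum_distrib_right[symmetric])
qed

lemma convex_comb_ereal_gap:
  assumes "finite A" "\<And>n. n \<in> A \<Longrightarrow> 0 \<le> p n" "(\<Sum>n\<in>A. p n) = 1"
    and "\<And>n. n \<in> A \<Longrightarrow> 0 < p n \<Longrightarrow> L n = ereal (l n) \<and> U n \<le> ereal (l n + t)"
  shows "(\<Sum>n\<in>A. ereal (p n) * L n) = ereal (\<Sum>n\<in>A. p n * l n) \<and>
    (\<Sum>n\<in>A. ereal (p n) * U n) \<le> ereal ((\<Sum>n\<in>A. p n * l n) + t)"
proof
  have "ereal (p n) * L n = ereal (p n * l n)" if "n \<in> A" for n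
    using assms(2,4)[OF that] by (cases "p n = 0") (auto simp: zero_ereal_def[symmetric])
  then show "(\<Sum>n\<in>A. ereal (p n) * L n) = ereal (\<Sum>n\<in>A. p n * l n)"
    by simp
  have "ereal (p n) * U n \<le> ereal (p n * (l n + t))" if "n \<in> A" for n
    using assms(2,4)[OF that] ereal_mult_left_mono[of "U n" "ereal (l n + t)" "ereal (p n)"]
    by (cases "p n = 0") (auto simp: zero_ereal_def[symmetric])
  then have "(\<Sum>n\<in>A. ereal (p n) * U n) \<le> (\<Sum>n\<in>A. ereal (p n * (l n + t)))"
    by (rule sum_mono)
  then show "(\<Sum>n\<in>A. ereal (p n) * U n) \<le> ereal ((\<Sum>n\<in>A. p n * l n) + t)"
    using assms(3) by (simp add: distrib_left sum.distrib sum_distrib_right[symmetric])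
qed

lemma ereal_real_if_diff_le:
  fixes U L :: ereal
  assumes "L < \<infinity>" "U - L \<le> ereal t"
  shows "L = ereal (real_of_ereal L)" "U \<le> ereal (real_of_ereal L + t)"
proof -
  obtain l where l: "L = ereal l"
    using assms by (cases L) auto
  show "L = ereal (real_of_ereal L)" using l by simp
  show "U \<le> ereal (real_of_ereal L + t)" using assms(2) l by (cases U) auto
qed

lemma weighted_gap_le:
  fixes U L :: "'m::finite \<Rightarrow> ereal"
  assumes "\<And>m. 0 \<le> p m" "(\<Sum>m\<in>UNIV. p m) = 1"
    and "\<And>m. 0 < p m \<Longrightarrow> L m < \<infinity>" "\<And>m. 0 < p m \<Longrightarrow> U m - L m \<le> ereal t"
  shows "(\<Sum>m\<in>UNIV. ereal (p m) * U m) - (\<Sum>m\<in>UNIV. ereal (p m) * L m) \<le> ereal t"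
proof -
  have "L m = ereal (real_of_ereal (L m)) \<and> U m \<le> ereal (real_of_ereal (L m) + t)" if "0 < p m" for m
    using ereal_real_if_diff_le[OF assms(3,4)[OF that]] by blast
  then have "(\<Sum>m\<in>UNIV. ereal (p m) * L m) = ereal (\<Sum>m\<in>UNIV. p m * real_of_ereal (L m)) \<and>
    (\<Sum>m\<in>UNIV. ereal (p m) * U m) \<le> ereal ((\<Sum>m\<in>UNIV. p m * real_of_ereal (L m)) + t)"
    using assms(1,2) by (intro convex_comb_ereal_gap) auto
  then show ?thesis by (simp add: ereal_minus_le add.commute)
qed

lemma pw_pos: "0 < pw TYPE('w::finite)"
  by (simp add: pw_def)

lemma sum_pw: "(\<Sum>\<omega>\<in>(UNIV::'w::finite set). pw TYPE('w)) = 1"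
  by (simp add: pw_def)

section \<open>Cut models\<close>

definition cut_val ::
  "('x::euclidean_space, 'y::euclidean_space, 'b::euclidean_space, 'w::finite) lcut
    \<Rightarrow> 'x \<Rightarrow> 'y \<Rightarrow> ('b, 'w) vec \<Rightarrow> real" where
  "cut_val c x y b = (case c of (th, la, si, nu, xs, ys, bs) \<Rightarrow>
     th + la \<bullet> (x - xs) + si \<bullet> (y - ys) + nu \<bullet> (b - bs))"

definition cut_slope :: "('x, 'y, 'b, 'w) lcut \<Rightarrow> 'y" where
  "cut_slope c = fst (snd (snd c))"

lemma cut_val_affine: "cut_val c x y b = cut_val c x 0 b + cut_slope c \<bullet> y"
  by (cases c) (simp add: cut_val_def cut_slope_def inner_diff_right)

lemma Lapprox_eq_SUP: "Lapprox S x y b = (SUP c\<in>S. ereal (cut_val c x y b))"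
  unfolding Lapprox_def cut_val_def by (simp add: split_def)

lemma Lapprox_ge_cut: "c \<in> S \<Longrightarrow> ereal (cut_val c x y b) \<le> Lapprox S x y b"
  unfolding Lapprox_eq_SUP by (rule SUP_upper)

lemma Lapprox_le: "(\<And>c. c \<in> S \<Longrightarrow> cut_val c x y b \<le> B) \<Longrightarrow> Lapprox S x y b \<le> ereal B"
  unfolding Lapprox_eq_SUP by (rule SUP_least) simp

lemma Lapprox_empty [simp]: "Lapprox {} x y b = - \<infinity>"
  by (simp add: Lapprox_eq_SUP bot_ereal_def)

lemma Lapprox_less_PInf:
  assumes "finite S"
  shows "Lapprox S x y b < \<infinity>"
proof (cases "S = {}")
  case False
  with assms have "Lapprox S x y b \<in> (\<lambda>c. ereal (cut_val c x y b)) ` S"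
    unfolding Lapprox_eq_SUP by (simp add: cSup_eq_Max)
  then show ?thesis by auto
qed simp

lemma Uapprox_le_cut:
  assumes "finite S" "(th, y0, b0) \<in> S"
  shows "Uapprox my mb S y b \<le> th + ereal (my * l1norm (y0 - y)) + ereal (mb * l1norm (b0 - b))"
proof -
  define \<mu> where "\<mu> s = (if s = (th, y0, b0) then 1 else 0 :: real)" for s
  have "(\<Sum>s\<in>S. ereal (\<mu> s) * fst s) = (\<Sum>s\<in>S. if s = (th, y0, b0) then fst s else 0)"
    "(\<Sum>s\<in>S. \<mu> s *\<^sub>R fst (snd s)) = (\<Sum>s\<in>S. if s = (th, y0, b0) then fst (snd s) else 0)"
    "(\<Sum>s\<in>S. \<mu> s *\<^sub>R snd (snd s)) = (\<Sum>s\<in>S. if s = (th, y0, b0) then snd (snd s) else 0)"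
    "(\<Sum>s\<in>S. \<mu> s) = (\<Sum>s\<in>S. if s = (th, y0, b0) then 1 else 0)"
    by (auto simp: \<mu>_def intro: sum.cong)
  then show ?thesis
    using assms unfolding Uapprox_def
    by (intro Inf_lower) (auto simp: \<mu>_def sum.delta' intro!: exI[of _ \<mu>])
qed

lemma gap_le_cut_pair:
  assumes "finite U" "(th, la, \<sigma>, \<nu>, x, y, b) \<in> L" "(thU, y, b) \<in> U" "thU \<le> ereal (th + e)"
  shows "Uapprox my mb U y' b - Lapprox L x y' b \<le> ereal (e + my * l1norm (y - y') - \<sigma> \<bullet> (y' - y))"
proof -
  have "Uapprox my mb U y' b \<le> thU + ereal (my * l1norm (y - y')) + ereal (mb * l1norm (b - b))"
    using Uapprox_le_cut[OF assms(1,3)] .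
  also have "\<dots> \<le> ereal (th + e + my * l1norm (y - y'))"
    using assms(4) by (cases thU) (auto simp: l1norm_def)
  finally have U: "Uapprox my mb U y' b \<le> ereal (th + e + my * l1norm (y - y'))" .
  have "ereal (th + \<sigma> \<bullet> (y' - y)) \<le> Lapprox L x y' b"
    using Lapprox_ge_cut[OF assms(2), of x y' b] by (simp add: cut_val_def)
  with U have "Uapprox my mb U y' b - Lapprox L x y' b
      \<le> ereal (th + e + my * l1norm (y - y')) - ereal (th + \<sigma> \<bullet> (y' - y))"
    by (rule ereal_minus_mono)
  then show ?thesis by (simp add: algebra_simps)
qed

section \<open>Stage problems\<close>

lemma feas_subset_Yset: "feas P d x yp b \<subseteq> Yset P d"
  unfolding feas_def by auto

definition scenario_points ::
  "('x, 'y, 'b, 'r, 'w::finite, 'm) msp \<Rightarrow> nat \<Rightarrow> 'y set" where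
  "scenario_points P d = {Y $ \<omega> | Y \<omega>. Y \<in> Yset P d}"

lemma scenario_points_norm_le:
  assumes "\<And>Y. Y \<in> Yset P d \<Longrightarrow> norm Y \<le> C" "z \<in> scenario_points P d"
  shows "norm (z :: 'y::euclidean_space) \<le> C"
proof -
  obtain Y \<omega> where z: "z = Y $ \<omega>" and Y: "Y \<in> Yset P d"
    using assms(2) unfolding scenario_points_def by blast
  have "norm (Y $ \<omega>) \<le> norm Y"
    by (rule Finite_Cartesian_Product.norm_nth_le)
  with assms(1)[OF Y] show ?thesis
    unfolding z by linarith
qed

text \<open>The terms \<open>\<Sum>n. \<pi>\<^sup>m\<^sup>n\<^sub>d\<^sub>+\<^sub>1 \<vartheta>\<^sup>\<omega>\<^sup>n\<close> of the objectives of LP and UP, at the optimal values of \<open>\<vartheta>\<close>.\<close>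

definition lower_next where
  "lower_next P (Lc :: nat \<Rightarrow> 'm::finite \<Rightarrow> 'm \<Rightarrow> ('x::euclidean_space, 'y::euclidean_space, 'b::euclidean_space, 'w::finite) lcut set)
      d m x y =
    (if d = Dn P then 0 else
     \<Sum>n\<in>UNIV. ereal (pid P (d + 1) m n) * Lapprox (Lc d m n) x y (bst P (d + 1) m n))"

definition upper_next where
  "upper_next P (Uc :: nat \<Rightarrow> 'm::finite \<Rightarrow> 'm \<Rightarrow> ('y::euclidean_space, 'b::euclidean_space, 'w::finite) ucut set)
      d m y =
    (if d = Dn P then 0 else
     \<Sum>n\<in>UNIV. ereal (pid P (d + 1) m n) * Uapprox (My P) (Mb P) (Uc d m n) y (bst P (d + 1) m n))"

lemma LPobj_eq:
  fixes Y :: "('y::euclidean_space, 'w::finite) vec"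
  shows "LPobj P Lc d m x Y =
    (\<Sum>\<omega>\<in>UNIV. ereal (pw TYPE('w)) * (ereal (cst P d \<bullet> (Y $ \<omega>)) + lower_next P Lc d m x (Y $ \<omega>)))"
  by (simp add: LPobj_def lower_next_def)

lemma UPobj_eq:
  fixes Y :: "('y::euclidean_space, 'w::finite) vec"
  shows "UPobj P Uc d m Y =
    (\<Sum>\<omega>\<in>UNIV. ereal (pw TYPE('w)) * (ereal (cst P d \<bullet> (Y $ \<omega>)) + upper_next P Uc d m (Y $ \<omega>)))"
  by (simp add: UPobj_def upper_next_def)

lemma LPval_le_LPobj: "Y \<in> feas P d x yp b \<Longrightarrow> LPval P L d m x yp b \<le> LPobj P L d m x Y"
  unfolding LPval_def by (rule INF_lower)

lemma UPval_le_UPobj: "Y \<in> feas P d x yp b \<Longrightarrow> UPval P U d m x yp b \<le> UPobj P U d m Y"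
  unfolding UPval_def by (rule INF_lower)

lemma UPval_last_stage: "UPval P U (Dn P) m x yp b = LPval P L (Dn P) m x yp b"
  unfolding UPval_def LPval_def UPobj_def LPobj_def by simp

lemma V_infeasible:
  assumes "1 \<le> d" "d \<le> Dn P" "feas P d x yp b = {}"
  shows "V P d m x yp b = \<infinity>"
proof (cases "Dn P - d")
  case 0
  then have "d = Dn P" using assms by simp
  then show ?thesis using assms(3) by (simp add: V_def top_ereal_def)
next
  case (Suc k)
  then have "Dn P - Suc k = d" by arith
  then show ?thesis using Suc assms(3) by (simp add: V_def Let_def top_ereal_def)
qed

text \<open>Each of the stages \<open>d + 1, \<dots>, D\<close> costs at most \<open>M\<close>, which bounds the cuts of stage \<open>d\<close>.\<close>

definition cuts_bounded where
  "cuts_bounded P x M L \<longleftrightarrow>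
    (\<forall>d\<in>{1..<Dn P}. \<forall>l n. \<forall>c\<in>L d l n. \<forall>z\<in>scenario_points P d.
       cut_val c x z (bst P (d + 1) l n) \<le> real (Dn P - d) * M)"

lemma cuts_boundedD:
  "cuts_bounded P x M L \<Longrightarrow> 1 \<le> d \<Longrightarrow> d < Dn P \<Longrightarrow> c \<in> L d l n \<Longrightarrow> z \<in> scenario_points P d
    \<Longrightarrow> cut_val c x z (bst P (d + 1) l n) \<le> real (Dn P - d) * M"
  by (simp add: cuts_bounded_def)

lemma bstage_subset:
  "fst LU d' l n \<subseteq> fst (bstage P x ms ws ys sg d LU) d' l n"
  "snd LU d' l n \<subseteq> snd (bstage P x ms ws ys sg d LU) d' l n"
  unfolding bstage_def Let_def by auto

lemma bcols_subset:
  assumes "j \<le> j'"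
  shows "fst (bcols P x dh ms ws ys sg LU j) d l n \<subseteq> fst (bcols P x dh ms ws ys sg LU j') d l n"
    and "snd (bcols P x dh ms ws ys sg LU j) d l n \<subseteq> snd (bcols P x dh ms ws ys sg LU j') d l n"
  by (rule lift_Suc_mono_le[where f="\<lambda>j. fst (bcols P x dh ms ws ys sg LU j) d l n", OF _ assms],
      simp add: bstage_subset)
    (rule lift_Suc_mono_le[where f="\<lambda>j. snd (bcols P x dh ms ws ys sg LU j) d l n", OF _ assms],
      simp add: bstage_subset)

lemma bcols_finite:
  assumes "\<And>d l n. finite (fst LU d l n) \<and> finite (snd LU d l n)"
  shows "finite (fst (bcols P x dh ms ws ys sg LU j) d l n) \<and> finite (snd (bcols P x dh ms ws ys sg LU j) d l n)"
  using assms by (induction j arbitrary: d l n) (simp_all add: bstage_def Let_def)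

locale msp_std =
  fixes P :: "('x::euclidean_space, 'y::euclidean_space, 'b::euclidean_space, 'r::euclidean_space, 'w::finite, 'm::finite) msp"
    and x :: 'x
  assumes std: "std_assms P x"
begin

lemma two_le_Dn: "2 \<le> Dn P"
  using std by (simp add: std_assms_def)

lemma pid_nonneg: "2 \<le> d \<Longrightarrow> d \<le> Dn P \<Longrightarrow> 0 \<le> pid P d l n"
  using std by (simp add: std_assms_def)

lemma sum_pid: "2 \<le> d \<Longrightarrow> d \<le> Dn P \<Longrightarrow> (\<Sum>n\<in>UNIV. pid P d l n) = 1"
  using std by (simp add: std_assms_def)

lemma pi1_nonneg: "0 \<le> pi1 P m"
  using std by (simp add: std_assms_def)

lemma sum_pi1: "(\<Sum>m\<in>UNIV. pi1 P m) = 1"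
  using std by (simp add: std_assms_def)

lemma Yset_polyhedron: "1 \<le> d \<Longrightarrow> d \<le> Dn P \<Longrightarrow> polyhedron (Yset P d)"
  using std by (simp add: std_assms_def)

lemma Yset_compact: "1 \<le> d \<Longrightarrow> d \<le> Dn P \<Longrightarrow> compact (Yset P d)"
  using std by (simp add: std_assms_def)

lemma My_pos: "0 < My P"
  using std by (simp add: std_assms_def)

lemma Yset_norm_bound:
  obtains C where "0 \<le> C" "\<And>d Y. 1 \<le> d \<Longrightarrow> d \<le> Dn P \<Longrightarrow> Y \<in> Yset P d \<Longrightarrow> norm Y \<le> C"
proof -
  have "bounded (\<Union>d\<in>{1..Dn P}. Yset P d)"
    by (intro bounded_UN ballI compact_imp_bounded Yset_compact) auto
  then obtain C where "\<forall>Y\<in>(\<Union>d\<in>{1..Dn P}. Yset P d). norm Y \<le> C"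
    unfolding bounded_iff by blast
  then show thesis
    by (intro that[of "max C 0"]) (auto simp: le_max_iff_disj)
qed

lemma V1_finite: "\<bar>V1 P m x\<bar> \<noteq> \<infinity>"
  using std by (simp add: std_assms_def)

lemma V_finite:
  "2 \<le> d \<Longrightarrow> d \<le> Dn P \<Longrightarrow> Y \<in> Yset P (d - 1) \<Longrightarrow> \<bar>V P d m x (Y $ \<omega>) (bst P d l m)\<bar> \<noteq> \<infinity>"
  using std by (simp add: std_assms_def)

lemma feas_first_stage_nonempty: "feas P 1 x 0 (bst1 P m) \<noteq> {}"
proof
  assume "feas P 1 x 0 (bst1 P m) = {}"
  then have "V1 P m x = \<infinity>"
    unfolding V1_def using two_le_Dn by (intro V_infeasible) auto
  then show False using V1_finite[of m] by simp
qed

lemma feas_nonempty: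
  assumes "2 \<le> d" "d \<le> Dn P" "z \<in> scenario_points P (d - 1)"
  shows "feas P d x z (bst P d l m) \<noteq> {}"
proof
  assume "feas P d x z (bst P d l m) = {}"
  then have "V P d m x z (bst P d l m) = \<infinity>"
    using assms(1,2) by (intro V_infeasible) auto
  moreover obtain Y \<omega> where "z = Y $ \<omega>" "Y \<in> Yset P (d - 1)"
    using assms(3) unfolding scenario_points_def by blast
  ultimately show False
    using V_finite[OF assms(1,2), of Y m \<omega> l] by simp
qed

lemma LPobj_le:
  assumes "1 \<le> d" "d \<le> Dn P" "\<And>\<omega>. cst P d \<bullet> (Y $ \<omega>) \<le> a"
    and "\<And>\<omega> n. d < Dn P \<Longrightarrow> 0 < pid P (d + 1) m n \<Longrightarrow>
      Lapprox (Lc d m n) x (Y $ \<omega>) (bst P (d + 1) m n) \<le> ereal B"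
  shows "LPobj P Lc d m x Y \<le> ereal (a + (if d < Dn P then B else 0))"
proof -
  have next_le: "lower_next P Lc d m x (Y $ \<omega>) \<le> ereal (if d < Dn P then B else 0)" for \<omega>
  proof (cases "d < Dn P")
    case True
    have "(\<Sum>n\<in>UNIV. ereal (pid P (d + 1) m n) * Lapprox (Lc d m n) x (Y $ \<omega>) (bst P (d + 1) m n))
        \<le> ereal B"
      by (rule convex_comb_ereal_le) (use True assms(1,4) in \<open>auto intro: pid_nonneg sum_pid\<close>)
    then show ?thesis using True by (simp add: lower_next_def)
  qed (use assms(2) in \<open>simp add: lower_next_def\<close>)
  then have "ereal (cst P d \<bullet> (Y $ \<omega>)) + lower_next P Lc d m x (Y $ \<omega>)
      \<le> ereal (a + (if d < Dn P then B else 0))" for \<omega>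
    using add_mono[OF _ next_le[of \<omega>], of "ereal (cst P d \<bullet> (Y $ \<omega>))" "ereal a"] assms(3)[of \<omega>]
    by simp
  then show ?thesis
    unfolding LPobj_eq by (intro convex_comb_ereal_le sum_pw) (auto simp: less_imp_le pw_pos)
qed

lemma LPobj_ge:
  assumes "1 \<le> d" "d \<le> Dn P" "\<And>\<omega>. a \<le> cst P d \<bullet> (Y $ \<omega>)"
    and "\<And>\<omega> n. d < Dn P \<Longrightarrow> 0 < pid P (d + 1) m n \<Longrightarrow>
      ereal B \<le> Lapprox (Lc d m n) x (Y $ \<omega>) (bst P (d + 1) m n)"
  shows "ereal (a + (if d < Dn P then B else 0)) \<le> LPobj P Lc d m x Y"
proof -
  have next_ge: "ereal (if d < Dn P then B else 0) \<le> lower_next P Lc d m x (Y $ \<omega>)" for \<omega>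
  proof (cases "d < Dn P")
    case True
    have "ereal B \<le>
        (\<Sum>n\<in>UNIV. ereal (pid P (d + 1) m n) * Lapprox (Lc d m n) x (Y $ \<omega>) (bst P (d + 1) m n))"
      by (rule convex_comb_ereal_ge) (use True assms(1,4) in \<open>auto intro: pid_nonneg sum_pid\<close>)
    then show ?thesis using True by (simp add: lower_next_def)
  qed (use assms(2) in \<open>simp add: lower_next_def\<close>)
  then have "ereal (a + (if d < Dn P then B else 0))
      \<le> ereal (cst P d \<bullet> (Y $ \<omega>)) + lower_next P Lc d m x (Y $ \<omega>)" for \<omega>
    using add_mono[OF _ next_ge[of \<omega>], of "ereal a" "ereal (cst P d \<bullet> (Y $ \<omega>))"] assms(3)[of \<omega>]
    by simp
  then show ?thesis
    unfolding LPobj_eq by (intro convex_comb_ereal_ge sum_pw) (auto simp: less_imp_le pw_pos)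
qed

lemma LPobj_less_PInf:
  assumes "1 \<le> d" "d \<le> Dn P" "\<And>n. finite (Lc d m n)"
  shows "LPobj P Lc d m x Y < \<infinity>"
proof -
  have "ereal (pid P (d + 1) m n) * Lapprox (Lc d m n) x y b \<noteq> \<infinity>" if "d < Dn P" for n y b
    using Lapprox_less_PInf[OF assms(3), of n x y b] pid_nonneg[of "d + 1" m n] assms(1) that
    by (cases "Lapprox (Lc d m n) x y b") auto
  then have "lower_next P Lc d m x y \<noteq> \<infinity>" for y
    using assms(2) by (auto simp: lower_next_def sum_Pinfty)
  then have "ereal (pw TYPE('w)) * (ereal (cst P d \<bullet> (Y $ \<omega>)) + lower_next P Lc d m x (Y $ \<omega>)) \<noteq> \<infinity>"
    for \<omega>
    using pw_pos[where 'w='w] by (cases "lower_next P Lc d m x (Y $ \<omega>)") auto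
  then show ?thesis
    unfolding LPobj_eq by (simp add: sum_Pinfty less_top[symmetric])
qed

lemma UPobj_le_LPobj_add_gap:
  assumes "1 \<le> d" "d < Dn P" "\<And>n. finite (Lc d m n)"
    and "\<And>\<omega> n. 0 < pid P (d + 1) m n \<Longrightarrow>
      Uapprox (My P) (Mb P) (Uc d m n) (Y $ \<omega>) (bst P (d + 1) m n)
      - Lapprox (Lc d m n) x (Y $ \<omega>) (bst P (d + 1) m n) \<le> ereal t"
  obtains r where "LPobj P Lc d m x Y = ereal r" "UPobj P Uc d m Y \<le> ereal (r + t)"
proof -
  define lv where "lv \<omega> n = real_of_ereal (Lapprox (Lc d m n) x (Y $ \<omega>) (bst P (d + 1) m n))" for \<omega> n
  define S where "S \<omega> = (\<Sum>n\<in>UNIV. pid P (d + 1) m n * lv \<omega> n)" for \<omega>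
  define r where "r \<omega> = cst P d \<bullet> (Y $ \<omega>) + S \<omega>" for \<omega>
  have "Lapprox (Lc d m n) x (Y $ \<omega>) (bst P (d + 1) m n) = ereal (lv \<omega> n) \<and>
      Uapprox (My P) (Mb P) (Uc d m n) (Y $ \<omega>) (bst P (d + 1) m n) \<le> ereal (lv \<omega> n + t)"
    if "0 < pid P (d + 1) m n" for \<omega> n
    using ereal_real_if_diff_le[OF Lapprox_less_PInf[OF assms(3)] assms(4)[OF that]]
    unfolding lv_def by blast
  note terms = this
  have nxt: "lower_next P Lc d m x (Y $ \<omega>) = ereal (S \<omega>) \<and>
      upper_next P Uc d m (Y $ \<omega>) \<le> ereal (S \<omega> + t)" for \<omega>
  proof -
    have "(\<Sum>n\<in>UNIV. ereal (pid P (d + 1) m n) * Lapprox (Lc d m n) x (Y $ \<omega>) (bst P (d + 1) m n))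
        = ereal (S \<omega>) \<and>
      (\<Sum>n\<in>UNIV. ereal (pid P (d + 1) m n) * Uapprox (My P) (Mb P) (Uc d m n) (Y $ \<omega>) (bst P (d + 1) m n))
        \<le> ereal (S \<omega> + t)"
      unfolding S_def
      by (rule convex_comb_ereal_gap) (use assms(1,2) terms in \<open>auto intro: pid_nonneg sum_pid\<close>)
    then show ?thesis using assms(2) by (simp add: lower_next_def upper_next_def)
  qed
  have "ereal (cst P d \<bullet> (Y $ \<omega>)) + lower_next P Lc d m x (Y $ \<omega>) = ereal (r \<omega>) \<and>
      ereal (cst P d \<bullet> (Y $ \<omega>)) + upper_next P Uc d m (Y $ \<omega>) \<le> ereal (r \<omega> + t)" for \<omega>
  proof -
    have "ereal (cst P d \<bullet> (Y $ \<omega>)) + upper_next P Uc d m (Y $ \<omega>)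
        \<le> ereal (cst P d \<bullet> (Y $ \<omega>)) + ereal (S \<omega> + t)"
      using nxt[of \<omega>] by (intro add_left_mono) simp
    then show ?thesis using nxt[of \<omega>] by (simp add: r_def add.assoc)
  qed
  then have "LPobj P Lc d m x Y = ereal (\<Sum>\<omega>\<in>UNIV. pw TYPE('w) * r \<omega>) \<and>
    UPobj P Uc d m Y \<le> ereal ((\<Sum>\<omega>\<in>UNIV. pw TYPE('w) * r \<omega>) + t)"
    unfolding LPobj_eq UPobj_eq
    by (intro convex_comb_ereal_gap) (simp_all add: pw_def)
  then show thesis using that by blast
qed

lemma UPval_le_LPval_add_gap:
  assumes "1 \<le> d" "d < Dn P" "\<And>n. finite (Lc d m n)" "LPopt P Lc d m x yp b Y"
    and "\<And>\<omega> n. 0 < pid P (d + 1) m n \<Longrightarrow>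
      Uapprox (My P) (Mb P) (Uc d m n) (Y $ \<omega>) (bst P (d + 1) m n)
      - Lapprox (Lc d m n) x (Y $ \<omega>) (bst P (d + 1) m n) \<le> ereal t"
  obtains r where "LPval P Lc d m x yp b = ereal r" "UPval P Uc d m x yp b \<le> ereal (r + t)"
proof -
  obtain r where r: "LPobj P Lc d m x Y = ereal r" "UPobj P Uc d m Y \<le> ereal (r + t)"
    using UPobj_le_LPobj_add_gap[where Lc=Lc and Uc=Uc and Y=Y, OF assms(1,2,3,5)] by blast
  have "UPval P Uc d m x yp b \<le> UPobj P Uc d m Y"
    using assms(4) unfolding LPopt_def by (blast intro: UPval_le_UPobj)
  with r assms(4) show thesis
    unfolding LPopt_def by (intro that[of r]) auto
qed

context
  fixes M :: real
  assumes cost_le: "\<And>d Y \<omega>. 1 \<le> d \<Longrightarrow> d \<le> Dn P \<Longrightarrow> Y \<in> Yset P d \<Longrightarrow> cst P d \<bullet> (Y $ \<omega>) \<le> M"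
begin

lemma LPobj_le_stage_bound:
  assumes "1 \<le> d" "d \<le> Dn P" "Y \<in> Yset P d" "cuts_bounded P x M L"
  shows "LPobj P L d m x Y \<le> ereal (real (Dn P - d + 1) * M)"
proof -
  have "Y $ \<omega> \<in> scenario_points P d" for \<omega>
    using assms(3) unfolding scenario_points_def by blast
  then have "Lapprox (L d m n) x (Y $ \<omega>) (bst P (d + 1) m n) \<le> ereal (real (Dn P - d) * M)"
    if "d < Dn P" for \<omega> n
    using cuts_boundedD[OF assms(4) assms(1) that] by (intro Lapprox_le) blast
  then have "LPobj P L d m x Y \<le> ereal (M + (if d < Dn P then real (Dn P - d) * M else 0))"
    using assms(1-3) cost_le by (intro LPobj_le) auto
  also have "\<dots> = ereal (real (Dn P - d + 1) * M)"
    using assms(2) by (auto simp: algebra_simps)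
  finally show ?thesis .
qed

lemma LPval_le_stage_bound:
  assumes "2 \<le> d" "d \<le> Dn P" "z \<in> scenario_points P (d - 1)" "cuts_bounded P x M L"
  shows "LPval P L d m x z (bst P d l m) \<le> ereal (real (Dn P - (d - 1)) * M)"
proof -
  obtain Y where Y: "Y \<in> feas P d x z (bst P d l m)"
    using feas_nonempty[OF assms(1-3)] by blast
  then have "Y \<in> Yset P d"
    using feas_subset_Yset by blast
  have "LPval P L d m x z (bst P d l m) \<le> LPobj P L d m x Y"
    using Y by (rule LPval_le_LPobj)
  also have "\<dots> \<le> ereal (real (Dn P - d + 1) * M)"
    using \<open>Y \<in> Yset P d\<close> assms by (intro LPobj_le_stage_bound) auto
  finally show ?thesis using assms(1,2) by (simp add: Suc_diff_le algebra_simps)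
qed

lemma bstage_cuts_bounded:
  assumes d: "2 \<le> d" "d \<le> Dn P" and L: "cuts_bounded P x M (fst LU)"
    and fin: "\<And>m. \<bar>LPval P (fst LU) d m x (ys (d - 1) $ ws (d - 1)) (bst P d (ms (d - 1)) m)\<bar> \<noteq> \<infinity>"
    and sg: "\<And>m. subgrad2 (\<lambda>y' b'. LPval P (fst LU) d m x y' b') (ys (d - 1) $ ws (d - 1))
      (bst P d (ms (d - 1)) m) (fst (snd (sg d m))) (snd (snd (sg d m)))"
  shows "cuts_bounded P x M (fst (bstage P x ms ws ys sg d LU))"
  unfolding cuts_bounded_def
proof (intro ballI allI)
  fix d' l n c z
  assume d': "d' \<in> {1..<Dn P}" and c: "c \<in> fst (bstage P x ms ws ys sg d LU) d' l n"
    and z: "z \<in> scenario_points P d'"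
  define yp where "yp = ys (d - 1) $ ws (d - 1)"
  define bb where "bb = bst P d (ms (d - 1)) n"
  define v where "v = LPval P (fst LU) d n x yp bb"
  show "cut_val c x z (bst P (d' + 1) l n) \<le> real (Dn P - d') * M"
  proof (cases "c \<in> fst LU d' l n")
    case True
    then show ?thesis using L d' z unfolding cuts_bounded_def by blast
  next
    case False
    then have d'_eq: "d' = d - 1"
      and c_eq: "c = (real_of_ereal v, fst (sg d n), fst (snd (sg d n)), snd (snd (sg d n)), x, yp, bb)"
      using c unfolding bstage_def Let_def v_def yp_def bb_def by (auto split: if_splits)
    have d'_Suc: "Suc d' = d" using d'_eq d by simp
    obtain rv where rv: "v = ereal rv"
      using fin[of n] unfolding v_def yp_def bb_def by (cases "LPval P (fst LU) d n x yp bb") auto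
    have "ereal (cut_val c x z (bst P (d' + 1) l n))
        = v + ereal (fst (snd (sg d n)) \<bullet> (z - yp) + snd (snd (sg d n)) \<bullet> (bst P d l n - bb))"
      by (simp add: c_eq cut_val_def d'_Suc rv add.assoc)
    also have "\<dots> \<le> LPval P (fst LU) d n x z (bst P d l n)"
      using sg[of n] unfolding subgrad2_def v_def yp_def bb_def by blast
    also have "\<dots> \<le> ereal (real (Dn P - (d - 1)) * M)"
      using z d'_eq d L by (intro LPval_le_stage_bound) auto
    finally show ?thesis using d'_eq by simp
  qed
qed

lemma bcols_cuts_bounded:
  assumes "dh \<le> Dn P" "bvalid P x dh ms ws ys sg LU" "cuts_bounded P x M (fst LU)"
  shows "j \<le> dh - 1 \<Longrightarrow> cuts_bounded P x M (fst (bcols P x dh ms ws ys sg LU j))"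
proof (induction j)
  case (Suc j)
  define d where "d = dh - j"
  have d: "2 \<le> d" "d \<le> Dn P" using assms(1) Suc.prems unfolding d_def by auto
  have "\<forall>m. \<bar>LPval P (fst (bcols P x dh ms ws ys sg LU j)) d m x (ys (d - 1) $ ws (d - 1))
        (bst P d (ms (d - 1)) m)\<bar> \<noteq> \<infinity> \<and>
      subgrad2 (\<lambda>y' b'. LPval P (fst (bcols P x dh ms ws ys sg LU j)) d m x y' b')
        (ys (d - 1) $ ws (d - 1)) (bst P d (ms (d - 1)) m) (fst (snd (sg d m))) (snd (snd (sg d m)))"
    using assms(2) Suc.prems unfolding bvalid_def Let_def d_def by auto
  then show ?case
    unfolding bcols.simps d_def[symmetric] using Suc
    by (intro bstage_cuts_bounded[OF d]) auto
qed (use assms(3) in simp)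

end

lemma finite_cuts_bounded:
  assumes "\<And>d l n. finite (L d l n)"
  obtains M0 where "\<And>d l n c z. 1 \<le> d \<Longrightarrow> d < Dn P \<Longrightarrow> c \<in> L d l n \<Longrightarrow> z \<in> scenario_points P d \<Longrightarrow>
    cut_val c x z (bst P (d + 1) l n) \<le> M0"
proof -
  obtain C where C: "0 \<le> C" "\<And>d Y. 1 \<le> d \<Longrightarrow> d \<le> Dn P \<Longrightarrow> Y \<in> Yset P d \<Longrightarrow> norm Y \<le> C"
    using Yset_norm_bound by blast
  define T where "T = (SIGMA (d, l, n) : {1..<Dn P} \<times> UNIV \<times> UNIV. L d l n)"
  define f where "f (t :: (nat \<times> 'm \<times> 'm) \<times> ('x, 'y, 'b, 'w) lcut) = (case t of ((d, l, n), c) \<Rightarrow>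
    \<bar>cut_val c x 0 (bst P (d + 1) l n)\<bar> + norm (cut_slope c) * C)" for t
  have "finite T"
    unfolding T_def using assms(1) by (intro finite_SigmaI) auto
  have f_nonneg: "0 \<le> f t" for t
    using C(1) by (auto simp: f_def split: prod.splits)
  show thesis
  proof (rule that[of "\<Sum>t\<in>T. f t"])
    fix d l n c z
    assume d: "1 \<le> d" "d < Dn P" and c: "c \<in> L d l n" and z: "z \<in> scenario_points P d"
    have "norm z \<le> C"
      using scenario_points_norm_le[OF C(2)[OF d(1) less_imp_le[OF d(2)]] z] .
    moreover have "f ((d, l, n), c) = \<bar>cut_val c x 0 (bst P (d + 1) l n)\<bar> + norm (cut_slope c) * C"
      by (simp add: f_def)
    ultimately have "cut_val c x z (bst P (d + 1) l n) \<le> f ((d, l, n), c)"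
      using cut_val_affine[of c x z "bst P (d + 1) l n"] abs_inner_le_bound[of z C "cut_slope c"]
        abs_ge_self[of "cut_val c x 0 (bst P (d + 1) l n)"]
      by linarith
    also have "\<dots> \<le> (\<Sum>t\<in>T. f t)"
      using \<open>finite T\<close> f_nonneg d c by (intro member_le_sum) (auto simp: T_def)
    finally show "cut_val c x z (bst P (d + 1) l n) \<le> (\<Sum>t\<in>T. f t)" .
  qed
qed

lemma cuts_and_costs_bounded:
  assumes "\<And>d l n. finite (L d l n)"
  obtains M where "\<And>d Y \<omega>. 1 \<le> d \<Longrightarrow> d \<le> Dn P \<Longrightarrow> Y \<in> Yset P d \<Longrightarrow> cst P d \<bullet> (Y $ \<omega>) \<le> M"
    and "cuts_bounded P x M L"
proof -
  obtain C where C: "0 \<le> C" "\<And>d Y. 1 \<le> d \<Longrightarrow> d \<le> Dn P \<Longrightarrow> Y \<in> Yset P d \<Longrightarrow> norm Y \<le> C"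
    using Yset_norm_bound by blast
  obtain M0 where M0: "\<And>d l n c z. 1 \<le> d \<Longrightarrow> d < Dn P \<Longrightarrow> c \<in> L d l n \<Longrightarrow>
      z \<in> scenario_points P d \<Longrightarrow> cut_val c x z (bst P (d + 1) l n) \<le> M0"
    by (rule finite_cuts_bounded[where L=L, OF assms]) (rule that)
  define M where "M = \<bar>M0\<bar> + (\<Sum>d\<le>Dn P. norm (cst P d)) * C"
  have "0 \<le> (\<Sum>d\<le>Dn P. norm (cst P d)) * C"
    using C(1) by (simp add: sum_nonneg)
  then have M: "M0 \<le> M" "0 \<le> M"
    unfolding M_def using abs_ge_self[of M0] by linarith+
  show thesis
  proof (rule that)
    fix d Y \<omega> assume d: "1 \<le> d" "d \<le> Dn P" and Y: "Y \<in> Yset P d"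
    have "cst P d \<bullet> (Y $ \<omega>) \<le> norm (cst P d) * C"
      using abs_inner_le_bound[OF order_trans[OF Finite_Cartesian_Product.norm_nth_le[of Y \<omega>] C(2)[OF d Y]],
          of "cst P d"] abs_ge_self[of "cst P d \<bullet> (Y $ \<omega>)"]
      by linarith
    also have "\<dots> \<le> (\<Sum>d\<le>Dn P. norm (cst P d)) * C"
      using C(1) d by (intro mult_right_mono member_le_sum) auto
    finally show "cst P d \<bullet> (Y $ \<omega>) \<le> M" by (simp add: M_def)
  next
    show "cuts_bounded P x M L"
      unfolding cuts_bounded_def
    proof (intro ballI allI)
      fix d l n c z
      assume "d \<in> {1..<Dn P}" "c \<in> L d l n" "z \<in> scenario_points P d"
      then have cut_le: "cut_val c x z (bst P (d + 1) l n) \<le> M" and "1 \<le> real (Dn P - d)"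
        using M0[of d c l n z] M(1) by auto
      then have "M \<le> real (Dn P - d) * M"
        using mult_right_mono[OF \<open>1 \<le> real (Dn P - d)\<close> M(2)] by simp
      with cut_le show "cut_val c x z (bst P (d + 1) l n) \<le> real (Dn P - d) * M"
        by (rule order_trans)
    qed
  qed
qed

lemma LPval_bounded_below:
  assumes "1 \<le> d" "d \<le> Dn P" "0 \<le> C" "\<And>Y. Y \<in> Yset P d \<Longrightarrow> norm Y \<le> C"
    and "\<And>n. d < Dn P \<Longrightarrow> 0 < pid P (d + 1) m n \<Longrightarrow> Linit d m n \<noteq> {}"
  obtains LB where "\<And>L yp b. (\<And>n. Linit d m n \<subseteq> L d m n) \<Longrightarrow> ereal LB \<le> LPval P L d m x yp b"
proof -
  define c where "c n = (SOME c. c \<in> Linit d m n)" for n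
  define g where "g n = \<bar>cut_val (c n) x 0 (bst P (d + 1) m n)\<bar> + norm (cut_slope (c n)) * C" for n
  have g_le: "g n \<le> (\<Sum>n\<in>UNIV. g n)" for n
    using assms(3) by (intro member_le_sum) (auto simp: g_def)
  show thesis
  proof (rule that)
    fix L :: "nat \<Rightarrow> 'm \<Rightarrow> 'm \<Rightarrow> ('x, 'y, 'b, 'w) lcut set" and yp b
    assume L: "\<And>n. Linit d m n \<subseteq> L d m n"
    have obj_ge: "ereal (- (norm (cst P d) * C) + (if d < Dn P then - (\<Sum>n\<in>UNIV. g n) else 0)) \<le> LPobj P L d m x Y"
      if "Y \<in> Yset P d" for Y
    proof (rule LPobj_ge[OF assms(1,2)])
      fix \<omega>
      have Y\<omega>: "norm (Y $ \<omega>) \<le> C"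
        using order_trans[OF Finite_Cartesian_Product.norm_nth_le assms(4)[OF that]] .
      then show "- (norm (cst P d) * C) \<le> cst P d \<bullet> (Y $ \<omega>)"
        using abs_inner_le_bound[OF Y\<omega>, of "cst P d"] by linarith
      fix n assume "d < Dn P" "0 < pid P (d + 1) m n"
      then have "c n \<in> Linit d m n"
        using assms(5) unfolding c_def some_in_eq by blast
      then have cn: "c n \<in> L d m n"
        using L by blast
      have "- (\<Sum>n\<in>UNIV. g n) \<le> cut_val (c n) x (Y $ \<omega>) (bst P (d + 1) m n)"
        using cut_val_affine[of "c n" x "Y $ \<omega>" "bst P (d + 1) m n"] abs_inner_le_bound[OF Y\<omega>, of "cut_slope (c n)"]
          abs_ge_minus_self[of "cut_val (c n) x 0 (bst P (d + 1) m n)"] g_le[of n]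
        unfolding g_def by linarith
      then show "ereal (- (\<Sum>n\<in>UNIV. g n)) \<le> Lapprox (L d m n) x (Y $ \<omega>) (bst P (d + 1) m n)"
        by (intro order_trans[OF _ Lapprox_ge_cut[OF cn]]) simp
    qed
    show "ereal (- (norm (cst P d) * C) + (if d < Dn P then - (\<Sum>n\<in>UNIV. g n) else 0))
        \<le> LPval P L d m x yp b"
      unfolding LPval_def using obj_ge feas_subset_Yset by (intro INF_greatest) blast
  qed
qed

end

section \<open>Runs of Algorithm 2\<close>

text \<open>A run with the choices of every iteration \<open>k\<close> fixed: the forward pass ends at stage \<open>dh k\<close>,
  visiting the states \<open>ms k\<close>, scenarios \<open>ws k\<close> and solutions \<open>ys k\<close>; \<open>sg k\<close> holds the
  subgradients computed by the backward pass.\<close>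

locale alg2_trace = msp_std P x
  for P :: "('x::euclidean_space, 'y::euclidean_space, 'b::euclidean_space, 'r::euclidean_space, 'w::finite, 'm::finite) msp"
    and x :: 'x +
  fixes \<delta> :: real and run :: "nat \<Rightarrow> ('x, 'y, 'b, 'w, 'm) astate"
    and dh :: "nat \<Rightarrow> nat" and ms :: "nat \<Rightarrow> nat \<Rightarrow> 'm" and ws :: "nat \<Rightarrow> nat \<Rightarrow> 'w"
    and ys :: "nat \<Rightarrow> nat \<Rightarrow> ('y, 'w) vec" and sg :: "nat \<Rightarrow> nat \<Rightarrow> 'm \<Rightarrow> 'x \<times> 'y \<times> ('b, 'w) vec"
  assumes delta_pos: "0 < \<delta>"
    and finite_init: "\<And>d l n. finite (Lcol (run 0) d l n) \<and> finite (Ucol (run 0) d l n)"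
    and forward: "\<And>k. forward P x \<delta> (run k) (dh k) (ms k) (ws k) (ys k)"
    and backward_valid: "\<And>k. bvalid P x (dh k) (ms k) (ws k) (ys k) (sg k) (Lcol (run k), Ucol (run k))"
    and cols_Suc: "\<And>k. (Lcol (run (Suc k)), Ucol (run (Suc k))) =
      bcols P x (dh k) (ms k) (ws k) (ys k) (sg k) (Lcol (run k), Ucol (run k)) (dh k - 1)"
    and thlo_Suc: "\<And>k m. thlo (run (Suc k)) m = LPval P (Lcol (run (Suc k))) 1 m x 0 (bst1 P m)"
    and thup_Suc: "\<And>k m. thup (run (Suc k)) m = UPval P (Ucol (run (Suc k))) 1 m x 0 (bst1 P m)"
begin

lemma Lcol_Suc: "Lcol (run (Suc k)) = fst (bcols P x (dh k) (ms k) (ws k) (ys k) (sg k) (Lcol (run k), Ucol (run k)) (dh k - 1))"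
  using cols_Suc[of k] by (metis fst_conv)

lemma Ucol_Suc: "Ucol (run (Suc k)) = snd (bcols P x (dh k) (ms k) (ws k) (ys k) (sg k) (Lcol (run k), Ucol (run k)) (dh k - 1))"
  using cols_Suc[of k] by (metis snd_conv)

lemma cols_finite: "finite (Lcol (run k) d l n) \<and> finite (Ucol (run k) d l n)"
proof (induction k arbitrary: d l n)
  case (Suc k)
  then show ?case
    unfolding Lcol_Suc Ucol_Suc by (intro bcols_finite) simp
qed (rule finite_init)

lemma cols_subset_Suc:
  "Lcol (run k) d l n \<subseteq> Lcol (run (Suc k)) d l n" "Ucol (run k) d l n \<subseteq> Ucol (run (Suc k)) d l n"
  using bcols_subset[where j=0 and j'="dh k - 1" and P=P and x=x and dh="dh k" and ms="ms k"
      and ws="ws k" and ys="ys k" and sg="sg k" and LU="(Lcol (run k), Ucol (run k))" and d=d and l=l and n=n]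
  by (simp_all add: Lcol_Suc Ucol_Suc)

lemma Lcol_mono: "k \<le> k' \<Longrightarrow> Lcol (run k) d l n \<subseteq> Lcol (run k') d l n"
  by (rule lift_Suc_mono_le[where f="\<lambda>k. Lcol (run k) d l n"]) (simp add: cols_subset_Suc)

lemma Ucol_mono: "k \<le> k' \<Longrightarrow> Ucol (run k) d l n \<subseteq> Ucol (run k') d l n"
  by (rule lift_Suc_mono_le[where f="\<lambda>k. Ucol (run k) d l n"]) (simp add: cols_subset_Suc)

lemma dh_bounds: "1 \<le> dh k" "dh k \<le> Dn P"
  using forward[of k] by (simp_all add: forward_def)

lemma first_state_maximizes_gap:
  "0 < pi1 P m \<Longrightarrow> thup (run k) m - thlo (run k) m \<le> thup (run k) (ms k 1) - thlo (run k) (ms k 1)"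
  using forward[of k] by (simp add: forward_def)

lemma forward_first_stage_opt: "LPopt P (Lcol (run k)) 1 (ms k 1) x 0 (bst1 P (ms k 1)) (ys k 1)"
  using forward[of k] by (simp add: forward_def)

lemma forward_stage_opt:
  "2 \<le> d \<Longrightarrow> d \<le> dh k \<Longrightarrow> LPopt P (Lcol (run k)) d (ms k d) x (ys k (d - 1) $ ws k (d - 1))
    (bst P d (ms k (d - 1)) (ms k d)) (ys k d)"
  using forward[of k] by (simp add: forward_def)

lemma forward_stage_gap:
  "2 \<le> d \<Longrightarrow> d \<le> dh k \<Longrightarrow> thr (Dn P) \<delta> d < fgap P (run k) x (ms k) (ys k) d (ws k (d - 1)) (ms k d)"
  using forward[of k] by (simp add: forward_def)

lemma forward_end_gap:
  "dh k < Dn P \<Longrightarrow> 0 < pid P (dh k + 1) (ms k (dh k)) n \<Longrightarrow>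
    fgap P (run k) x (ms k) (ys k) (dh k + 1) \<omega> n \<le> thr (Dn P) \<delta> (dh k + 1)"
  using forward[of k] by (simp add: forward_def)

definition gap_unit where "gap_unit = \<delta> / real (Dn P - 1)"

lemma gap_unit_pos: "0 < gap_unit"
  using delta_pos two_le_Dn by (simp add: gap_unit_def)

lemma thr_eq: "thr (Dn P) \<delta> d = ereal (real (Dn P - d + 1) * gap_unit)"
  by (simp add: thr_def gap_unit_def)

lemma forward_end_UPval_le:
  assumes "dh k < Dn P" "LPopt P (Lcol (run k)) (dh k) (ms k (dh k)) x yp b (ys k (dh k))"
  obtains r where "LPval P (Lcol (run k)) (dh k) (ms k (dh k)) x yp b = ereal r"
    "UPval P (Ucol (run k)) (dh k) (ms k (dh k)) x yp b \<le> ereal (r + real (Dn P - dh k) * gap_unit)"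
proof (rule UPval_le_LPval_add_gap[OF dh_bounds(1) assms(1) _ assms(2)])
  show "finite (Lcol (run k) (dh k) (ms k (dh k)) n)" for n
    using cols_finite by blast
  fix \<omega> n assume "0 < pid P (dh k + 1) (ms k (dh k)) n"
  then show "Uapprox (My P) (Mb P) (Ucol (run k) (dh k) (ms k (dh k)) n) (ys k (dh k) $ \<omega>) (bst P (dh k + 1) (ms k (dh k)) n)
      - Lapprox (Lcol (run k) (dh k) (ms k (dh k)) n) x (ys k (dh k) $ \<omega>) (bst P (dh k + 1) (ms k (dh k)) n)
      \<le> ereal (real (Dn P - dh k) * gap_unit)"
    using forward_end_gap[OF assms(1)] assms(1) by (simp add: fgap_def thr_eq Suc_diff_Suc)
qed

text \<open>Stated for iteration \<open>Suc k\<close>: the forward pass picks its first state by comparing the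
  bounds \<open>thlo\<close>, \<open>thup\<close>, which are LP and UP values only once an iteration has computed them.\<close>

lemma stops_if_shallow:
  assumes "dh (Suc k) = 1"
  shows "alg2_stops P \<delta> (run (Suc (Suc k)))"
proof -
  let ?s = "run (Suc k)"
  have same: "thlo (run (Suc (Suc k))) = thlo ?s" "thup (run (Suc (Suc k))) = thup ?s"
    using assms by (simp_all add: fun_eq_iff thlo_Suc thup_Suc Lcol_Suc Ucol_Suc)
  have "1 < Dn P" using two_le_Dn by simp
  then obtain r where
    "LPval P (Lcol ?s) 1 (ms (Suc k) 1) x 0 (bst1 P (ms (Suc k) 1)) = ereal r"
    "UPval P (Ucol ?s) 1 (ms (Suc k) 1) x 0 (bst1 P (ms (Suc k) 1)) \<le> ereal (r + real (Dn P - 1) * gap_unit)"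
    by (rule forward_end_UPval_le[of "Suc k", unfolded assms, OF _ forward_first_stage_opt]) (rule that)
  then have "thup ?s (ms (Suc k) 1) - thlo ?s (ms (Suc k) 1) \<le> ereal \<delta>"
    unfolding thlo_Suc thup_Suc using two_le_Dn by (simp add: gap_unit_def ereal_minus_le add.commute)
  then have gap: "thup ?s m - thlo ?s m \<le> ereal \<delta>" if "0 < pi1 P m" for m
    using first_state_maximizes_gap[OF that] order_trans by blast
  have fin: "thlo ?s m < \<infinity>" for m
  proof -
    obtain Y where "Y \<in> feas P 1 x 0 (bst1 P m)"
      using feas_first_stage_nonempty by blast
    then have "thlo ?s m \<le> LPobj P (Lcol ?s) 1 m x Y"
      unfolding thlo_Suc by (rule LPval_le_LPobj)
    also have "\<dots> < \<infinity>"
      using two_le_Dn cols_finite by (intro LPobj_less_PInf) auto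
    finally show ?thesis .
  qed
  show ?thesis
    unfolding alg2_stops_def theta_up_def theta_lo_def same
    by (rule weighted_gap_le[OF pi1_nonneg sum_pi1 fin gap])
qed

text \<open>The node where the backward pass of iteration \<open>k\<close> starts: the paper's
  \<open>y\<^sup>\<omega>\<^sub>d\<^sub>-\<^sub>1\<close> and \<open>b\<^sup>l\<^sup>m\<^sub>d\<close> with \<open>d = dh k\<close>, \<open>l = m\<^sub>d\<^sub>-\<^sub>1\<close>, \<open>m = m\<^sub>d\<close>, \<open>\<omega> = \<omega>\<^sub>d\<^sub>-\<^sub>1\<close>.\<close>

definition visit_parent where "visit_parent k = ms k (dh k - 1)"
definition visit_state where "visit_state k = ms k (dh k)"
definition visit_point where "visit_point k = ys k (dh k - 1) $ ws k (dh k - 1)"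
definition visit_data where "visit_data k = bst P (dh k) (visit_parent k) (visit_state k)"
definition visit_value where
  "visit_value k = real_of_ereal (LPval P (Lcol (run k)) (dh k) (visit_state k) x (visit_point k) (visit_data k))"
definition visit_slope where "visit_slope k = fst (snd (sg k (dh k) (visit_state k)))"

lemmas visit_defs = visit_parent_def visit_state_def visit_point_def visit_data_def

lemma visit_backward_valid:
  assumes "2 \<le> dh k"
  shows "\<bar>LPval P (Lcol (run k)) (dh k) m x (visit_point k) (bst P (dh k) (visit_parent k) m)\<bar> \<noteq> \<infinity>"
    and "subgrad2 (\<lambda>y' b'. LPval P (Lcol (run k)) (dh k) m x y' b') (visit_point k)
      (bst P (dh k) (visit_parent k) m) (fst (snd (sg k (dh k) m))) (snd (snd (sg k (dh k) m)))"
  using backward_valid[of k] assms unfolding bvalid_def Let_def visit_defs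
  by (metis (no_types, lifting) add_0 bcols.simps(1) diff_zero fst_conv)+

lemma visit_LPval:
  "2 \<le> dh k \<Longrightarrow> LPval P (Lcol (run k)) (dh k) (visit_state k) x (visit_point k) (visit_data k) = ereal (visit_value k)"
  using visit_backward_valid(1)[of k "visit_state k"] unfolding visit_value_def visit_data_def
  by (cases "LPval P (Lcol (run k)) (dh k) (visit_state k) x (visit_point k) (visit_data k)") auto

lemma visit_cuts:
  assumes "2 \<le> dh k"
  shows "(visit_value k, fst (sg k (dh k) (visit_state k)), visit_slope k, snd (snd (sg k (dh k) (visit_state k))),
      x, visit_point k, visit_data k) \<in> Lcol (run (Suc k)) (dh k - 1) (visit_parent k) (visit_state k)"
    and "(UPval P (Ucol (run k)) (dh k) (visit_state k) x (visit_point k) (visit_data k), visit_point k, visit_data k)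
      \<in> Ucol (run (Suc k)) (dh k - 1) (visit_parent k) (visit_state k)"
proof -
  let ?bc = "bcols P x (dh k) (ms k) (ws k) (ys k) (sg k) (Lcol (run k), Ucol (run k))"
  have "fst (?bc 1) (dh k - 1) (visit_parent k) (visit_state k) \<subseteq> Lcol (run (Suc k)) (dh k - 1) (visit_parent k) (visit_state k)"
    "snd (?bc 1) (dh k - 1) (visit_parent k) (visit_state k) \<subseteq> Ucol (run (Suc k)) (dh k - 1) (visit_parent k) (visit_state k)"
    using assms bcols_subset[where j=1 and j'="dh k - 1" and P=P and x=x and dh="dh k" and ms="ms k"
      and ws="ws k" and ys="ys k" and sg="sg k" and LU="(Lcol (run k), Ucol (run k))"]
    unfolding Lcol_Suc Ucol_Suc by simp_all
  then show "(visit_value k, fst (sg k (dh k) (visit_state k)), visit_slope k, snd (snd (sg k (dh k) (visit_state k))),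
      x, visit_point k, visit_data k) \<in> Lcol (run (Suc k)) (dh k - 1) (visit_parent k) (visit_state k)"
    and "(UPval P (Ucol (run k)) (dh k) (visit_state k) x (visit_point k) (visit_data k), visit_point k, visit_data k)
      \<in> Ucol (run (Suc k)) (dh k - 1) (visit_parent k) (visit_state k)"
    by (auto simp: bstage_def Let_def visit_value_def visit_slope_def visit_defs)
qed

lemma visit_UPval_le:
  assumes "2 \<le> dh k"
  shows "UPval P (Ucol (run k)) (dh k) (visit_state k) x (visit_point k) (visit_data k)
    \<le> ereal (visit_value k + real (Dn P - dh k) * gap_unit)"
proof (cases "dh k < Dn P")
  case True
  have "LPopt P (Lcol (run k)) (dh k) (ms k (dh k)) x (visit_point k) (visit_data k) (ys k (dh k))"
    using forward_stage_opt[OF assms order_refl] by (simp add: visit_defs)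
  then obtain r where "LPval P (Lcol (run k)) (dh k) (visit_state k) x (visit_point k) (visit_data k) = ereal r"
    "UPval P (Ucol (run k)) (dh k) (visit_state k) x (visit_point k) (visit_data k)
      \<le> ereal (r + real (Dn P - dh k) * gap_unit)"
    unfolding visit_state_def by (rule forward_end_UPval_le[OF True])
  with visit_LPval[OF assms] show ?thesis by simp
next
  case False
  then have "dh k = Dn P" using dh_bounds(2)[of k] by simp
  with visit_LPval[OF assms] show ?thesis
    using UPval_last_stage[of P "Ucol (run k)"] by simp
qed

lemma visit_gap:
  "2 \<le> dh k \<Longrightarrow> ereal (real (Dn P - dh k + 1) * gap_unit) <
    Uapprox (My P) (Mb P) (Ucol (run k) (dh k - 1) (visit_parent k) (visit_state k)) (visit_point k) (visit_data k)
    - Lapprox (Lcol (run k) (dh k - 1) (visit_parent k) (visit_state k)) x (visit_point k) (visit_data k)"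
  using forward_stage_gap[of "dh k" k] by (simp add: fgap_def thr_eq visit_defs)

lemma visit_in_Yset: "2 \<le> dh k \<Longrightarrow> ys k (dh k - 1) \<in> Yset P (dh k - 1)"
proof (cases "dh k = 2")
  case True
  then show ?thesis
    using forward_first_stage_opt[of k] feas_subset_Yset unfolding LPopt_def by fastforce
next
  case False
  moreover assume "2 \<le> dh k"
  ultimately show ?thesis
    using forward_stage_opt[of "dh k - 1" k] feas_subset_Yset unfolding LPopt_def by fastforce
qed

lemma visit_next_cuts_nonempty:
  assumes "dh k < Dn P" "0 < pid P (dh k + 1) (visit_state k) n"
  shows "Lcol (run k) (dh k) (visit_state k) n \<noteq> {}"
  using forward_end_gap[OF assms(1), of n "ws k 0"] assms thr_eq
  by (auto simp: fgap_def visit_state_def)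

lemma revisit_separated:
  assumes "k < k'" "2 \<le> dh k" "dh k' = dh k" "visit_parent k' = visit_parent k" "visit_state k' = visit_state k"
  shows "gap_unit - My P * l1norm (visit_point k - visit_point k') < visit_slope k \<bullet> (visit_point k - visit_point k')"
proof -
  have data: "visit_data k' = visit_data k"
    using assms(3-5) by (simp add: visit_data_def)
  have le: "Suc k \<le> k'" using assms(1) by simp
  have low: "(visit_value k, fst (sg k (dh k) (visit_state k)), visit_slope k, snd (snd (sg k (dh k) (visit_state k))),
      x, visit_point k, visit_data k) \<in> Lcol (run k') (dh k - 1) (visit_parent k) (visit_state k)"
    by (rule subsetD[OF Lcol_mono[OF le] visit_cuts(1)[OF assms(2)]])
  have up: "(UPval P (Ucol (run k)) (dh k) (visit_state k) x (visit_point k) (visit_data k), visit_point k, visit_data k)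
      \<in> Ucol (run k') (dh k - 1) (visit_parent k) (visit_state k)"
    by (rule subsetD[OF Ucol_mono[OF le] visit_cuts(2)[OF assms(2)]])
  have "ereal (real (Dn P - dh k + 1) * gap_unit) <
      Uapprox (My P) (Mb P) (Ucol (run k') (dh k - 1) (visit_parent k) (visit_state k)) (visit_point k') (visit_data k)
      - Lapprox (Lcol (run k') (dh k - 1) (visit_parent k) (visit_state k)) x (visit_point k') (visit_data k)"
    using visit_gap[of k'] assms data by simp
  also have "\<dots> \<le> ereal (real (Dn P - dh k) * gap_unit + My P * l1norm (visit_point k - visit_point k')
          - visit_slope k \<bullet> (visit_point k' - visit_point k))"
    by (rule gap_le_cut_pair[OF conjunct2[OF cols_finite] low up visit_UPval_le[OF assms(2)]])
  finally have "real (Dn P - dh k + 1) * gap_unit < real (Dn P - dh k) * gap_unit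
      + My P * l1norm (visit_point k - visit_point k') - visit_slope k \<bullet> (visit_point k' - visit_point k)"
    by simp
  then show ?thesis
    by (simp add: algebra_simps inner_diff_right)
qed

lemma cuts_uniformly_bounded:
  obtains M where "\<And>d Y \<omega>. 1 \<le> d \<Longrightarrow> d \<le> Dn P \<Longrightarrow> Y \<in> Yset P d \<Longrightarrow> cst P d \<bullet> (Y $ \<omega>) \<le> M"
    and "\<And>k. cuts_bounded P x M (Lcol (run k))"
proof -
  obtain M where cost: "\<And>d Y \<omega>. 1 \<le> d \<Longrightarrow> d \<le> Dn P \<Longrightarrow> Y \<in> Yset P d \<Longrightarrow> cst P d \<bullet> (Y $ \<omega>) \<le> M"
    and init: "cuts_bounded P x M (Lcol (run 0))"
    using cuts_and_costs_bounded[of "Lcol (run 0)", OF conjunct1[OF cols_finite]] by blast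
  have "cuts_bounded P x M (Lcol (run k))" for k
  proof (induction k)
    case (Suc k)
    show ?case
      unfolding Lcol_Suc
      by (rule bcols_cuts_bounded[OF cost dh_bounds(2) backward_valid]) (use Suc.IH in auto)
  qed (rule init)
  with cost show thesis by (rule that)
qed

lemma visit_values_bounded_below:
  assumes "2 \<le> dh k0"
  obtains LB where "\<And>k. k0 \<le> k \<Longrightarrow> dh k = dh k0 \<Longrightarrow> visit_state k = visit_state k0 \<Longrightarrow> LB \<le> visit_value k"
proof -
  obtain C where C: "0 \<le> C" "\<And>d Y. 1 \<le> d \<Longrightarrow> d \<le> Dn P \<Longrightarrow> Y \<in> Yset P d \<Longrightarrow> norm Y \<le> C"
    using Yset_norm_bound by blast
  obtain LB where LB: "\<And>L yp b. (\<And>n. Lcol (run k0) (dh k0) (visit_state k0) n \<subseteq> L (dh k0) (visit_state k0) n)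
      \<Longrightarrow> ereal LB \<le> LPval P L (dh k0) (visit_state k0) x yp b"
    using LPval_bounded_below[where m="visit_state k0" and Linit="Lcol (run k0)",
        OF dh_bounds[of k0] C(1) C(2)[OF dh_bounds[of k0]] visit_next_cuts_nonempty[of k0]]
    by blast
  show thesis
  proof (rule that)
    fix k assume k: "k0 \<le> k" "dh k = dh k0" "visit_state k = visit_state k0"
    have "ereal LB \<le> LPval P (Lcol (run k)) (dh k) (visit_state k) x (visit_point k) (visit_data k)"
      unfolding k(2,3) by (rule LB) (rule Lcol_mono[OF k(1)])
    then show "LB \<le> visit_value k"
      using visit_LPval[of k] assms k(2) by simp
  qed
qed

lemma visit_slopes_bounded:
  assumes "2 \<le> dh k0"
  obtains R where "\<And>k z. k0 \<le> k \<Longrightarrow> dh k = dh k0 \<Longrightarrow> visit_parent k = visit_parent k0 \<Longrightarrow>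
    visit_state k = visit_state k0 \<Longrightarrow> z \<in> scenario_points P (dh k0 - 1) \<Longrightarrow> visit_slope k \<bullet> (z - visit_point k) \<le> R"
proof -
  obtain M where cost: "\<And>d Y \<omega>. 1 \<le> d \<Longrightarrow> d \<le> Dn P \<Longrightarrow> Y \<in> Yset P d \<Longrightarrow> cst P d \<bullet> (Y $ \<omega>) \<le> M"
    and bounded: "\<And>k. cuts_bounded P x M (Lcol (run k))"
    using cuts_uniformly_bounded by blast
  obtain LB where LB: "\<And>k. k0 \<le> k \<Longrightarrow> dh k = dh k0 \<Longrightarrow> visit_state k = visit_state k0 \<Longrightarrow> LB \<le> visit_value k"
    using visit_values_bounded_below[OF assms] by blast
  show thesis
  proof (rule that)
    fix k z
    assume k: "k0 \<le> k" "dh k = dh k0" "visit_parent k = visit_parent k0" "visit_state k = visit_state k0"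
      and z: "z \<in> scenario_points P (dh k0 - 1)"
    have dk: "2 \<le> dh k" using assms k(2) by simp
    have "LPval P (Lcol (run k)) (dh k) (visit_state k) x (visit_point k) (visit_data k)
        + ereal (visit_slope k \<bullet> (z - visit_point k) + snd (snd (sg k (dh k) (visit_state k))) \<bullet> (visit_data k - visit_data k))
        \<le> LPval P (Lcol (run k)) (dh k) (visit_state k) x z (visit_data k)"
      using visit_backward_valid(2)[OF dk, of "visit_state k"]
      unfolding subgrad2_def visit_slope_def visit_data_def by blast
    then have "ereal (visit_value k + visit_slope k \<bullet> (z - visit_point k))
        \<le> LPval P (Lcol (run k)) (dh k) (visit_state k) x z (visit_data k)"
      using visit_LPval[OF dk] by simp
    also have "\<dots> \<le> ereal (real (Dn P - (dh k - 1)) * M)"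
      using dk dh_bounds(2)[of k] z k(2) bounded[of k] unfolding visit_data_def
      by (intro LPval_le_stage_bound[OF cost]) auto
    finally show "visit_slope k \<bullet> (z - visit_point k) \<le> real (Dn P - (dh k0 - 1)) * M - LB"
      using LB[OF k(1,2,4)] k(2) by simp
  qed
qed

lemma recurrent_visit:
  obtains p :: "nat \<Rightarrow> nat" and d l m \<omega> where "strict_mono p" "\<And>i. 1 \<le> p i" "\<And>i. dh (p i) = d"
    "\<And>i. visit_parent (p i) = l" "\<And>i. visit_state (p i) = m" "\<And>i. ws (p i) (d - 1) = \<omega>"
proof -
  define pattern where
    "pattern k = (dh (Suc k), visit_parent (Suc k), visit_state (Suc k), ws (Suc k) (dh (Suc k) - 1))" for k
  have "range pattern \<subseteq> {..Dn P} \<times> UNIV"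
    using dh_bounds(2) by (auto simp: pattern_def)
  then have "finite (range pattern)"
    by (rule finite_subset) simp
  then obtain k0 where "infinite {k. pattern k = pattern k0}"
    using pigeonhole_infinite[OF infinite_UNIV_nat] by auto
  then obtain r :: "nat \<Rightarrow> nat" where r: "strict_mono r" "\<And>i. r i \<in> {k. pattern k = pattern k0}"
    using infinite_enumerate by blast
  then have "dh (Suc (r i)) = dh (Suc k0) \<and> visit_parent (Suc (r i)) = visit_parent (Suc k0) \<and>
      visit_state (Suc (r i)) = visit_state (Suc k0) \<and>
      ws (Suc (r i)) (dh (Suc k0) - 1) = ws (Suc k0) (dh (Suc k0) - 1)" for i
    using r(2)[of i] unfolding pattern_def by simp
  with r(1) show thesis
    by (intro that[of "Suc \<circ> r" "dh (Suc k0)" "visit_parent (Suc k0)" "visit_state (Suc k0)"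
          "ws (Suc k0) (dh (Suc k0) - 1)"]) (simp_all add: strict_mono_def)
qed

lemma revisit_separated_vec:
  assumes "k < k'" "2 \<le> dh k" "dh k' = dh k" "visit_parent k' = visit_parent k"
    "visit_state k' = visit_state k" "ws k' (dh k - 1) = ws k (dh k - 1)"
  defines "d \<equiv> dh k - 1" and "\<omega> \<equiv> ws k (dh k - 1)"
  shows "gap_unit - My P * real DIM('y) * norm (ys k d - ys k' d)
    < axis \<omega> (visit_slope k) \<bullet> (ys k d - ys k' d)"
proof -
  have point: "visit_point k = ys k d $ \<omega>" "visit_point k' = ys k' d $ \<omega>"
    using assms(3,6) by (simp_all add: visit_point_def d_def \<omega>_def)
  have "norm (visit_point k - visit_point k') \<le> norm (ys k d - ys k' d)"
    using Finite_Cartesian_Product.norm_nth_le[of "ys k d - ys k' d" \<omega>] by (simp add: point)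
  then have "l1norm (visit_point k - visit_point k') \<le> real DIM('y) * norm (ys k d - ys k' d)"
    using l1norm_le_DIM_norm[of "visit_point k - visit_point k'"]
    by (meson mult_left_mono of_nat_0_le_iff order_trans)
  then have "My P * l1norm (visit_point k - visit_point k') \<le> My P * real DIM('y) * norm (ys k d - ys k' d)"
    using mult_left_mono[OF _ less_imp_le[OF My_pos]] by (simp add: mult.assoc)
  moreover have "axis \<omega> (visit_slope k) \<bullet> (ys k d - ys k' d) = visit_slope k \<bullet> (visit_point k - visit_point k')"
    by (simp add: inner_axis' point)
  ultimately show ?thesis
    using revisit_separated[OF assms(1-5)] by linarith
qed

lemma never_stopping_runs_go_deep:
  assumes "\<nexists>k. alg2_stops P \<delta> (run (Suc k))" "1 \<le> k"
  shows "2 \<le> dh k"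
proof -
  obtain j where "k = Suc j"
    using assms(2) by (cases k) auto
  then have "dh k \<noteq> 1"
    using stops_if_shallow[of j] assms(1) by blast
  with dh_bounds(1)[of k] show ?thesis by simp
qed

theorem eventually_stops: "\<exists>k. alg2_stops P \<delta> (run (Suc k))"
proof (rule ccontr)
  assume never: "\<nexists>k. alg2_stops P \<delta> (run (Suc k))"
  obtain p :: "nat \<Rightarrow> nat" and d l m \<omega> where p: "strict_mono p" "\<And>i. 1 \<le> p i" "\<And>i. dh (p i) = d"
    "\<And>i. visit_parent (p i) = l" "\<And>i. visit_state (p i) = m" "\<And>i. ws (p i) (d - 1) = \<omega>"
    by (rule recurrent_visit) (rule that)
  have d: "2 \<le> d" "d \<le> Dn P"
    using never_stopping_runs_go_deep[OF never p(2)[of 0]] dh_bounds(2)[of "p 0"] p(3)[of 0] by simp_all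
  obtain R where R: "\<And>k z. p 0 \<le> k \<Longrightarrow> dh k = d \<Longrightarrow> visit_parent k = l \<Longrightarrow>
      visit_state k = m \<Longrightarrow> z \<in> scenario_points P (d - 1) \<Longrightarrow> visit_slope k \<bullet> (z - visit_point k) \<le> R"
    using visit_slopes_bounded[of "p 0", unfolded p(3-5)[of 0], OF d(1)] by blast
  show False
  proof (rule compact_polyhedron_no_separating_cuts[where Y="\<lambda>i. ys (p i) (d - 1)"
        and \<sigma>="\<lambda>i. axis \<omega> (visit_slope (p i))" and c="My P * real DIM('y)"])
    show "polyhedron (Yset P (d - 1))" "compact (Yset P (d - 1))"
      using d by (simp_all add: Yset_polyhedron Yset_compact)
    show "ys (p i) (d - 1) \<in> Yset P (d - 1)" for i
      using visit_in_Yset[of "p i"] d p(3)[of i] by simp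
    show "0 < gap_unit" by (rule gap_unit_pos)
    show "gap_unit - My P * real DIM('y) * norm (ys (p i) (d - 1) - ys (p j) (d - 1))
        < axis \<omega> (visit_slope (p i)) \<bullet> (ys (p i) (d - 1) - ys (p j) (d - 1))" if "i < j" for i j
      using revisit_separated_vec[of "p i" "p j"] p d that by (simp add: strict_mono_less)
  next
    fix i Z assume "Z \<in> Yset P (d - 1)"
    then have "Z $ \<omega> \<in> scenario_points P (d - 1)"
      unfolding scenario_points_def by blast
    moreover have "p 0 \<le> p i"
      using p(1) by (simp add: strict_mono_less_eq)
    ultimately have "visit_slope (p i) \<bullet> (Z $ \<omega> - visit_point (p i)) \<le> R"
      using R p(3-5) by blast
    then show "axis \<omega> (visit_slope (p i)) \<bullet> (Z - ys (p i) (d - 1)) \<le> R"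
      using p(3,6)[of i] by (simp add: inner_axis' visit_point_def)
  qed
qed

end

theorem theorem2:
  fixes P :: "('x::euclidean_space, 'y::euclidean_space, 'b::euclidean_space, 'r::euclidean_space, 'w::finite, 'm::finite) msp"
    and x :: 'x and \<delta> :: real
    and run :: "nat \<Rightarrow> ('x, 'y, 'b, 'w, 'm) astate"
  assumes "std_assms P x"
    and "0 < \<delta>"
    and "\<forall>d l n. finite (Lcol (run 0) d l n) \<and> finite (Ucol (run 0) d l n)"
    and "\<forall>m. thlo (run 0) m = - \<infinity> \<and> thup (run 0) m = \<infinity>"
    and "\<forall>k. alg2_step P x \<delta> (run k) (run (Suc k))"
  shows "\<exists>k. alg2_stops P \<delta> (run (Suc k))"
proof -
  obtain dh ms ws ys sg where step: "\<And>k. forward P x \<delta> (run k) (dh k) (ms k) (ws k) (ys k) \<and>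
      bvalid P x (dh k) (ms k) (ws k) (ys k) (sg k) (Lcol (run k), Ucol (run k)) \<and>
      (let LU = bcols P x (dh k) (ms k) (ws k) (ys k) (sg k) (Lcol (run k), Ucol (run k)) (dh k - 1) in
        Lcol (run (Suc k)) = fst LU \<and> Ucol (run (Suc k)) = snd LU \<and>
        (\<forall>m. thlo (run (Suc k)) m = LPval P (fst LU) 1 m x 0 (bst1 P m)) \<and>
        (\<forall>m. thup (run (Suc k)) m = UPval P (snd LU) 1 m x 0 (bst1 P m)) \<and>
        (\<forall>m. \<exists>la. subgrad (\<lambda>x'. LPval P (fst LU) 1 m x' 0 (bst1 P m)) x la))"
    using assms(5) unfolding alg2_step_def choice_iff by blast
  interpret alg2_trace P x \<delta> run dh ms ws ys sg
    using assms(1-3) step by unfold_locales (auto simp: Let_def prod_eq_iff)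
  show ?thesis by (rule eventually_stops)
qed

end
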